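(* Let $\gamma>0$ and let $(Z_t),(\tilde Z_t)$ solve $dX_t=V_t\,dt$, $dV_t=-\gamma V_t\,dt+\sqrt{2\gamma}\,dW_t$ with deterministic initial values $z\ne\tilde z$. There exists $c>0$ (depending on $\gamma,z,\tilde z$ but not on $h$ or the coupling) such that for every $h>0$ and every coupling $\mu_h$ of $(Z^h_k,\tilde Z^h_k)_{k\in\mathbb{N}}=(Z_{hk},\tilde Z_{hk})_{k\in\mathbb{N}}$ which is Markovian and satisfies $\mu_h\bigl(\bigcap_{k\ge0}\{Q^h_k=\tilde Q^h_k\}\bigr)=1$, one has for all $k\in\mathbb{N}$ \[ \mu_h(Z^h_k\ne\tilde Z^h_k)\ge c\min\bigl(1,h^{-1}e^{-\gamma hk}\bigr). \]
   Context: $W$ is a standard $d$-dimensional Brownian motion, $Z_t=(X_t,V_t)$, $\tilde Z_t=(\tilde X_t,\tilde V_t)$, and $Q^h_k=X_{hk}+\gamma^{-1}V_{hk}$, $\tilde Q^h_k=\tilde X_{hk}+\gamma^{-1}\tilde V_{hk}$. A coupling $\mu_h$ is Markovian if $(Z^h_k,\tilde Z^h_k)_{k\in\mathbb{N}}$ is a Markov chain under $\mu_h$ with respect to its own natural filtration. *)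

theory Defs
  imports "HOL-Probability.Probability"
begin

definition is_BM1 :: "'a measure \<Rightarrow> (real \<Rightarrow> 'a \<Rightarrow> real) \<Rightarrow> bool" where
  "is_BM1 P B \<longleftrightarrow>
     prob_space P \<and>
     (\<forall>t\<ge>0. B t \<in> borel_measurable P) \<and>
     (AE \<omega> in P. B 0 \<omega> = 0 \<and> continuous_on {0..} (\<lambda>t. B t \<omega>)) \<and>
     (\<forall>s t. 0 \<le> s \<longrightarrow> s < t \<longrightarrow>
        distributed P lborel (\<lambda>\<omega>. B t \<omega> - B s \<omega>) (normal_density 0 (sqrt (t - s)))) \<and>
     (\<forall>(n::nat) (ts::nat \<Rightarrow> real). 0 \<le> ts 0 \<longrightarrow> (\<forall>i<n. ts i < ts (Suc i)) \<longrightarrow>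
        prob_space.indep_vars P (\<lambda>_. borel) (\<lambda>i \<omega>. B (ts (Suc i)) \<omega> - B (ts i) \<omega>) {..<n})"

definition is_BM :: "'a measure \<Rightarrow> (real \<Rightarrow> 'a \<Rightarrow> real ^ 'd) \<Rightarrow> bool" where
  "is_BM P W \<longleftrightarrow>
     (\<forall>i. is_BM1 P (\<lambda>t \<omega>. W t \<omega> $ i)) \<and>
     prob_space.indep_vars P (\<lambda>_. Pi\<^sub>M {0..} (\<lambda>_. borel))
        (\<lambda>i \<omega>. restrict (\<lambda>t. W t \<omega> $ i) {0..}) UNIV"

definition solves_kinetic ::
  "real \<Rightarrow> 'a measure \<Rightarrow> (real \<Rightarrow> 'a \<Rightarrow> real ^ 'd) \<Rightarrow> ((real ^ 'd) \<times> (real ^ 'd))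
     \<Rightarrow> (real \<Rightarrow> 'a \<Rightarrow> (real ^ 'd) \<times> (real ^ 'd)) \<Rightarrow> bool" where
  "solves_kinetic \<gamma> P W z Z \<longleftrightarrow>
     (\<forall>t\<ge>0. Z t \<in> borel_measurable P) \<and>
     (AE \<omega> in P. continuous_on {0..} (\<lambda>t. Z t \<omega>) \<and>
        (\<forall>t\<ge>0. fst (Z t \<omega>) = fst z + integral {0..t} (\<lambda>s. snd (Z s \<omega>)) \<and>
                snd (Z t \<omega>) = snd z - \<gamma> *\<^sub>R integral {0..t} (\<lambda>s. snd (Z s \<omega>))
                               + sqrt (2 * \<gamma>) *\<^sub>R W t \<omega>))"

definition nat_filt :: "(nat \<Rightarrow> 's::topological_space) measure \<Rightarrow> nat \<Rightarrow> (nat \<Rightarrow> 's) measure" where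
  "nat_filt \<mu> k = vimage_algebra (space \<mu>) (\<lambda>\<omega>. restrict \<omega> {..k}) (Pi\<^sub>M {..k} (\<lambda>_. borel))"

definition markov_seq :: "(nat \<Rightarrow> 's::topological_space) measure \<Rightarrow> bool" where
  "markov_seq \<mu> \<longleftrightarrow>
     (\<forall>k. \<forall>B \<in> sets (borel :: 's measure).
        AE \<omega> in \<mu>. real_cond_exp \<mu> (nat_filt \<mu> k) (indicator {\<omega>. \<omega> (Suc k) \<in> B}) \<omega>
                 = real_cond_exp \<mu> (vimage_algebra (space \<mu>) (\<lambda>\<omega>. \<omega> k) borel)
                     (indicator {\<omega>. \<omega> (Suc k) \<in> B}) \<omega>)"

end

theory Submission
  imports Defs
begin

text \<open>
  The combination \<open>Q = X + V/\<gamma>\<close> satisfies \<open>Q\<^sub>t = Q\<^sub>0 + sqrt (2/\<gamma>) W\<^sub>t\<close>, so a coupling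
  keeping \<open>Q\<close> synchronised forces \<open>Q\<^sub>0 = Qt\<^sub>0\<close>, and then the initial velocities differ.
  Consider the velocity at time \<open>k h\<close> minus \<open>b\<close> times a weighted sum of the increments of \<open>Q\<close> on the
  grid: it is a function of \<open>Z\<^sub>k\<close> and \<open>Q\<^sub>0, \<dots>, Q\<^sub>k\<close>, so under the coupling the statistics of the
  two chains differ only on \<open>{Z\<^sub>k \<noteq> Zt\<^sub>k}\<close>, and the expectations of any test function bounded
  by \<open>1\<close> differ by at most \<open>2 \<mu>(Z\<^sub>k \<noteq> Zt\<^sub>k)\<close>.
  On the other hand, each statistic is \<open>exp (-\<gamma> k h)\<close> times the initial velocity plus the same
  centred functional of the driving Brownian motion, of variance \<open>O(h\<^sup>2)\<close> for \<open>b = 1\<close> (the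
  \<open>Q\<close>-increments cancel the noise of the velocity up to \<open>O(h)\<close>) and \<open>O(1)\<close> for \<open>b = 0\<close>.
  A bounded test function separates two translates by \<open>\<Delta>\<close> of a law with standard deviation
  \<open>\<sigma>\<close> by at least a multiple of \<open>\<Delta>/(\<sigma> + \<Delta>)\<close>; with \<open>\<Delta> = exp (-\<gamma> k h) \<bar>v - vt\<bar>\<close> this gives
  the bound \<open>c min 1 (exp (-\<gamma> k h) / h)\<close>.
\<close>

section \<open>A bounded test function\<close>

definition softsign :: "real \<Rightarrow> real" where
  "softsign x = x / (1 + \<bar>x\<bar>)"

lemma abs_softsign_le_1: "\<bar>softsign x\<bar> \<le> 1"
  unfolding softsign_def abs_divide by (simp add: divide_le_eq)

lemma continuous_on_softsign: "continuous_on UNIV softsign"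
  unfolding softsign_def by (intro continuous_intros) (auto simp: add_pos_nonneg)

lemma borel_measurable_softsign [measurable]: "softsign \<in> borel_measurable borel"
  using continuous_on_softsign by (rule borel_measurable_continuous_onI)

lemma softsign_diff_ge:
  assumes "a \<le> b"
  shows "(b - a) / (1 + max \<bar>a\<bar> \<bar>b\<bar>)^2 \<le> softsign b - softsign a"
proof -
  have pos: "(1 + \<bar>a\<bar>) * (1 + \<bar>b\<bar>) > 0" by (simp add: add_pos_nonneg)
  have eq: "softsign b - softsign a = (b*(1+\<bar>a\<bar>) - a*(1+\<bar>b\<bar>)) / ((1+\<bar>a\<bar>)*(1+\<bar>b\<bar>))"
    unfolding softsign_def using pos by (simp add: field_simps add_pos_nonneg)
  have num: "b - a \<le> b*(1+\<bar>a\<bar>) - a*(1+\<bar>b\<bar>)"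
    using assms by (cases "a \<ge> 0"; cases "b \<ge> 0") (auto simp: algebra_simps intro: mult_nonpos_nonneg[of a b])
  have den: "(1+\<bar>a\<bar>)*(1+\<bar>b\<bar>) \<le> (1 + max \<bar>a\<bar> \<bar>b\<bar>)^2"
    by (simp add: power2_eq_square mult_mono)
  have "(b - a) / (1 + max \<bar>a\<bar> \<bar>b\<bar>)^2 \<le> (b - a) / ((1+\<bar>a\<bar>)*(1+\<bar>b\<bar>))"
    using assms pos den by (intro divide_left_mono) auto
  also have "\<dots> \<le> (b*(1+\<bar>a\<bar>) - a*(1+\<bar>b\<bar>)) / ((1+\<bar>a\<bar>)*(1+\<bar>b\<bar>))"
    using num pos by (intro divide_right_mono) auto
  finally show ?thesis unfolding eq .
qed

lemma softsign_shift_gap: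
  fixes N \<sigma> \<Delta> :: real
  assumes "\<sigma> > 0" "\<Delta> > 0"
  shows "(\<Delta>/(\<sigma>+\<Delta>)) * (2/9 - 8/81 * (N^2/\<sigma>^2))
           \<le> softsign ((N + \<Delta>/2)/(\<sigma>+\<Delta>)) - softsign ((N - \<Delta>/2)/(\<sigma>+\<Delta>))"
proof -
  define s where "s = \<sigma> + \<Delta>"
  define a where "a = (N - \<Delta>/2)/s"
  define b where "b = (N + \<Delta>/2)/s"
  define y where "y = \<bar>N\<bar>/\<sigma>"
  have s: "s > 0" "\<sigma> \<le> s" "\<Delta> \<le> s" using assms by (auto simp: s_def)
  have ab: "a \<le> b" and ba: "b - a = \<Delta>/s"
    using s assms by (auto simp: a_def b_def divide_right_mono field_simps)
  have Ny: "\<bar>N\<bar>/s \<le> y" unfolding y_def using assms s by (intro divide_left_mono) auto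
  have "\<bar>N - \<Delta>/2\<bar> \<le> \<bar>N\<bar> + \<Delta>/2" "\<bar>N + \<Delta>/2\<bar> \<le> \<bar>N\<bar> + \<Delta>/2"
    using assms by (auto simp: abs_if)
  then have "\<bar>a\<bar> \<le> \<bar>N\<bar>/s + (\<Delta>/2)/s" "\<bar>b\<bar> \<le> \<bar>N\<bar>/s + (\<Delta>/2)/s"
    using s unfolding a_def b_def abs_divide add_divide_distrib[symmetric]
    by (auto intro!: divide_right_mono)
  moreover have "(\<Delta>/2)/s \<le> 1/2" using s assms by (simp add: field_simps)
  ultimately have "max \<bar>a\<bar> \<bar>b\<bar> \<le> y + 1/2" using Ny by linarith
  then have "(1 + max \<bar>a\<bar> \<bar>b\<bar>)^2 \<le> (3/2 + y)^2"
    by (intro power_mono) auto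
  also have "\<dots> \<le> 9/2 + 2*y^2"
    using zero_le_power2[of "y - 3/2"] by (simp add: power2_eq_square algebra_simps)
  finally have den: "(1 + max \<bar>a\<bar> \<bar>b\<bar>)^2 \<le> 9/2 + 2*y^2" .
  \<comment> \<open>tangent line of the convex function \<open>1/(9/2 + 2t)\<close> at \<open>t = 0\<close>\<close>
  have tangent: "2/9 - 8/81*y^2 \<le> 1/(9/2 + 2*y^2)"
  proof -
    have "(2/9 - 8/81*y^2) * (9/2 + 2*y^2) = 1 - 16/81 * y^4"
      by (simp add: algebra_simps power2_eq_square power4_eq_xxxx)
    then show ?thesis by (simp add: le_divide_eq add_pos_nonneg)
  qed
  have "(\<Delta>/s) * (2/9 - 8/81*y^2) \<le> (\<Delta>/s) * (1/(9/2 + 2*y^2))"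
    using tangent s assms by (intro mult_left_mono) auto
  also have "\<dots> \<le> (\<Delta>/s) / (1 + max \<bar>a\<bar> \<bar>b\<bar>)^2"
    using den s assms by (simp add: divide_left_mono add_pos_nonneg)
  also have "\<dots> \<le> softsign b - softsign a" using softsign_diff_ge[OF ab] ba by simp
  finally show ?thesis unfolding a_def b_def y_def s_def using assms by (simp add: power_divide)
qed

text \<open>The pointwise bound is affine in \<open>N\<^sup>2\<close>, so only the second moment of \<open>N\<close> enters.\<close>

lemma integral_softsign_shift_gap:
  fixes N :: "'a \<Rightarrow> real"
  assumes "prob_space M" "N \<in> borel_measurable M" "integrable M (\<lambda>\<omega>. (N \<omega>)^2)"
    and "(\<integral>\<omega>. (N \<omega>)^2 \<partial>M) \<le> \<sigma>^2" "\<sigma> > 0" "\<Delta> > 0"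
  shows "(10/81) * (\<Delta>/(\<sigma>+\<Delta>)) \<le>
           (\<integral>\<omega>. softsign ((N \<omega> + \<Delta>/2)/(\<sigma>+\<Delta>)) \<partial>M) - (\<integral>\<omega>. softsign ((N \<omega> - \<Delta>/2)/(\<sigma>+\<Delta>)) \<partial>M)"
proof -
  interpret prob_space M by fact
  define s where "s = \<sigma> + \<Delta>"
  have s: "s > 0" using assms by (simp add: s_def)
  have int_softsign: "integrable M (\<lambda>\<omega>. softsign ((N \<omega> + x)/s))" for x
    by (rule integrable_const_bound[where B=1]) (use assms(2) abs_softsign_le_1 in auto)
  have "(\<integral>\<omega>. (N \<omega>)^2 \<partial>M)/\<sigma>^2 \<le> 1"
    using assms(4,5) by (simp add: divide_le_eq_1)
  then have moment: "2/9 - 8/81 \<le> 2/9 - 8/81 * ((\<integral>\<omega>. (N \<omega>)^2 \<partial>M)/\<sigma>^2)"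
    by linarith
  have "(10/81) * (\<Delta>/s) = (\<Delta>/s) * (2/9 - 8/81)" by simp
  also have "\<dots> \<le> (\<Delta>/s) * (2/9 - 8/81 * ((\<integral>\<omega>. (N \<omega>)^2 \<partial>M)/\<sigma>^2))"
    by (rule mult_left_mono[OF moment]) (use assms s in simp)
  also have "\<dots> = (\<integral>\<omega>. (\<Delta>/s) * (2/9 - 8/81 * ((N \<omega>)^2/\<sigma>^2)) \<partial>M)"
    using assms(3) by (simp add: prob_space)
  also have "\<dots> \<le> (\<integral>\<omega>. softsign ((N \<omega> + \<Delta>/2)/s) - softsign ((N \<omega> - \<Delta>/2)/s) \<partial>M)"
    using softsign_shift_gap[OF assms(5,6)] assms(3) int_softsign[of "\<Delta>/2"] int_softsign[of "-\<Delta>/2"]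
    by (intro integral_mono) (auto simp: s_def)
  also have "\<dots> = (\<integral>\<omega>. softsign ((N \<omega> + \<Delta>/2)/s) \<partial>M) - (\<integral>\<omega>. softsign ((N \<omega> - \<Delta>/2)/s) \<partial>M)"
    using int_softsign[of "\<Delta>/2"] int_softsign[of "-\<Delta>/2"] by simp
  finally show ?thesis by (simp add: s_def)
qed

lemma tendsto_integral_bounded_continuous:
  fixes X :: "nat \<Rightarrow> 'a \<Rightarrow> real" and f :: "real \<Rightarrow> real"
  assumes "prob_space M" "\<And>r. X r \<in> borel_measurable M" "Y \<in> borel_measurable M"
    and "AE \<omega> in M. (\<lambda>r. X r \<omega>) \<longlonglongrightarrow> Y \<omega>"
    and "continuous_on UNIV f" "\<And>x. \<bar>f x\<bar> \<le> B"
  shows "(\<lambda>r. \<integral>\<omega>. f (X r \<omega>) \<partial>M) \<longlonglongrightarrow> (\<integral>\<omega>. f (Y \<omega>) \<partial>M)"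
proof (rule integral_dominated_convergence[where w="\<lambda>_. B"])
  interpret prob_space M by fact
  have [measurable]: "f \<in> borel_measurable borel"
    using assms(5) by (rule borel_measurable_continuous_onI)
  show "(\<lambda>\<omega>. f (Y \<omega>)) \<in> borel_measurable M" "(\<lambda>\<omega>. f (X r \<omega>)) \<in> borel_measurable M" for r
    using assms(2,3) by measurable
  show "integrable M (\<lambda>_. B)" by simp
  show "AE \<omega> in M. norm (f (X r \<omega>)) \<le> B" for r using assms(6) by simp
  show "AE \<omega> in M. (\<lambda>r. f (X r \<omega>)) \<longlonglongrightarrow> f (Y \<omega>)"
    using assms(4) by eventually_elim
      (use assms(5) in \<open>auto intro: isCont_tendsto_compose simp: continuous_on_eq_continuous_at\<close>)
qed

lemma integral_softsign_shift_gap_limit: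
  fixes N :: "nat \<Rightarrow> 'a \<Rightarrow> real"
  assumes "prob_space M" "\<And>r. N r \<in> borel_measurable M" "Y \<in> borel_measurable M"
    and "AE \<omega> in M. (\<lambda>r. N r \<omega>) \<longlonglongrightarrow> Y \<omega>"
    and "\<forall>\<^sub>F r in sequentially. integrable M (\<lambda>\<omega>. (N r \<omega>)^2) \<and> (\<integral>\<omega>. (N r \<omega>)^2 \<partial>M) \<le> \<sigma>^2"
    and "\<sigma> > 0" "\<Delta> > 0"
  shows "(10/81) * (\<Delta>/(\<sigma>+\<Delta>)) \<le>
           (\<integral>\<omega>. softsign ((Y \<omega> + \<Delta>/2)/(\<sigma>+\<Delta>)) \<partial>M) - (\<integral>\<omega>. softsign ((Y \<omega> - \<Delta>/2)/(\<sigma>+\<Delta>)) \<partial>M)"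
proof (rule tendsto_lowerbound)
  have cont: "continuous_on UNIV (\<lambda>y. softsign ((y + x)/(\<sigma>+\<Delta>)))" for x
    using assms(6,7) by (intro continuous_on_compose2[OF continuous_on_softsign] continuous_intros) auto
  have lim: "(\<lambda>r. \<integral>\<omega>. softsign ((N r \<omega> + x)/(\<sigma>+\<Delta>)) \<partial>M) \<longlonglongrightarrow> (\<integral>\<omega>. softsign ((Y \<omega> + x)/(\<sigma>+\<Delta>)) \<partial>M)"
    for x
    by (rule tendsto_integral_bounded_continuous[OF assms(1-4) cont abs_softsign_le_1])
  show "(\<lambda>r. (\<integral>\<omega>. softsign ((N r \<omega> + \<Delta>/2)/(\<sigma>+\<Delta>)) \<partial>M) - (\<integral>\<omega>. softsign ((N r \<omega> + -\<Delta>/2)/(\<sigma>+\<Delta>)) \<partial>M))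
        \<longlonglongrightarrow> (\<integral>\<omega>. softsign ((Y \<omega> + \<Delta>/2)/(\<sigma>+\<Delta>)) \<partial>M) - (\<integral>\<omega>. softsign ((Y \<omega> - \<Delta>/2)/(\<sigma>+\<Delta>)) \<partial>M)"
    using tendsto_diff[OF lim[of "\<Delta>/2"] lim[of "-\<Delta>/2"]] by simp
  show "\<forall>\<^sub>F r in sequentially. (10/81) * (\<Delta>/(\<sigma>+\<Delta>)) \<le>
          (\<integral>\<omega>. softsign ((N r \<omega> + \<Delta>/2)/(\<sigma>+\<Delta>)) \<partial>M) - (\<integral>\<omega>. softsign ((N r \<omega> + -\<Delta>/2)/(\<sigma>+\<Delta>)) \<partial>M)"
    using assms(5) by eventually_elim
      (use integral_softsign_shift_gap[OF assms(1,2) _ _ assms(6,7)] in simp)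
qed simp

lemma integral_eq_of_ae_limits_of_equal_laws:
  fixes X :: "nat \<Rightarrow> 'a \<Rightarrow> real" and Xt :: "nat \<Rightarrow> 'b \<Rightarrow> real" and f :: "real \<Rightarrow> real"
  assumes "prob_space P" "prob_space Pt"
    and "\<And>r. X r \<in> borel_measurable P" "\<And>r. Xt r \<in> borel_measurable Pt"
    and "\<forall>\<^sub>F r in sequentially. distr P borel (X r) = distr Pt borel (Xt r)"
    and "Y \<in> borel_measurable P" "Yt \<in> borel_measurable Pt"
    and "AE \<omega> in P. (\<lambda>r. X r \<omega>) \<longlonglongrightarrow> Y \<omega>" "AE \<omega> in Pt. (\<lambda>r. Xt r \<omega>) \<longlonglongrightarrow> Yt \<omega>"
    and "continuous_on UNIV f" "\<And>x. \<bar>f x\<bar> \<le> B"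
  shows "(\<integral>\<omega>. f (Y \<omega>) \<partial>P) = (\<integral>\<omega>. f (Yt \<omega>) \<partial>Pt)"
proof (rule LIMSEQ_unique)
  have [measurable]: "f \<in> borel_measurable borel"
    using assms(10) by (rule borel_measurable_continuous_onI)
  have "(\<integral>\<omega>. f (X r \<omega>) \<partial>P) = (\<integral>\<omega>. f (Xt r \<omega>) \<partial>Pt)"
    if "distr P borel (X r) = distr Pt borel (Xt r)" for r
  proof -
    have "(\<integral>\<omega>. f (X r \<omega>) \<partial>P) = (\<integral>y. f y \<partial>distr P borel (X r))"
      by (rule integral_distr[symmetric]) (use assms(3) in measurable)
    also have "\<dots> = (\<integral>\<omega>. f (Xt r \<omega>) \<partial>Pt)"
      unfolding that by (rule integral_distr) (use assms(4) in measurable)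
    finally show ?thesis .
  qed
  then have "\<forall>\<^sub>F r in sequentially. (\<integral>\<omega>. f (X r \<omega>) \<partial>P) = (\<integral>\<omega>. f (Xt r \<omega>) \<partial>Pt)"
    using assms(5) by (auto elim: eventually_mono)
  then show "(\<lambda>r. \<integral>\<omega>. f (Xt r \<omega>) \<partial>Pt) \<longlonglongrightarrow> (\<integral>\<omega>. f (Y \<omega>) \<partial>P)"
    using tendsto_integral_bounded_continuous[OF assms(1,3,6,8,10,11)] by (rule Lim_transform_eventually[rotated])
  show "(\<lambda>r. \<integral>\<omega>. f (Xt r \<omega>) \<partial>Pt) \<longlonglongrightarrow> (\<integral>\<omega>. f (Yt \<omega>) \<partial>Pt)"
    by (rule tendsto_integral_bounded_continuous[OF assms(2,4,7,9,10,11)])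
qed

lemma coupling_inequality:
  fixes F Ft :: "'a \<Rightarrow> real" and g :: "real \<Rightarrow> real"
  assumes "prob_space M" "F \<in> borel_measurable M" "Ft \<in> borel_measurable M"
    and "g \<in> borel_measurable borel" "\<And>x. \<bar>g x\<bar> \<le> 1" "D \<in> sets M"
    and "AE \<omega> in M. F \<omega> \<noteq> Ft \<omega> \<longrightarrow> \<omega> \<in> D"
  shows "\<bar>(\<integral>\<omega>. g (F \<omega>) \<partial>M) - (\<integral>\<omega>. g (Ft \<omega>) \<partial>M)\<bar> \<le> 2 * measure M D"
proof -
  interpret prob_space M by fact
  have int: "integrable M (\<lambda>\<omega>. g (G \<omega>))" if "G \<in> borel_measurable M" for G
    by (rule integrable_const_bound[where B=1]) (use assms that in auto)
  have "\<bar>(\<integral>\<omega>. g (F \<omega>) \<partial>M) - (\<integral>\<omega>. g (Ft \<omega>) \<partial>M)\<bar> = \<bar>\<integral>\<omega>. g (F \<omega>) - g (Ft \<omega>) \<partial>M\<bar>"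
    using int assms(2,3) by simp
  also have "\<dots> \<le> (\<integral>\<omega>. \<bar>g (F \<omega>) - g (Ft \<omega>)\<bar> \<partial>M)"
    by (rule integral_abs_bound)
  also have "\<dots> \<le> (\<integral>\<omega>. 2 * indicator D \<omega> \<partial>M)"
  proof (rule integral_mono_AE)
    show "integrable M (\<lambda>\<omega>. \<bar>g (F \<omega>) - g (Ft \<omega>)\<bar>)" using int assms(2,3) by auto
    show "integrable M (\<lambda>\<omega>. 2 * indicator D \<omega> :: real)"
      using assms(6) by (intro integrable_mult_right integrable_real_indicator) (auto simp: emeasure_eq_measure)
    show "AE \<omega> in M. \<bar>g (F \<omega>) - g (Ft \<omega>)\<bar> \<le> 2 * indicator D \<omega>"
      using assms(7)
    proof eventually_elim
      case (elim \<omega>)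
      show ?case
      proof (cases "F \<omega> = Ft \<omega>")
        case False
        then have "\<omega> \<in> D" using elim by blast
        moreover have "\<bar>g (F \<omega>) - g (Ft \<omega>)\<bar> \<le> 2"
          using assms(5)[of "F \<omega>"] assms(5)[of "Ft \<omega>"] by linarith
        ultimately show ?thesis by simp
      qed simp
    qed
  qed
  also have "\<dots> = 2 * measure M D" using assms(6) by simp
  finally show ?thesis .
qed

section \<open>Increments of Brownian motion\<close>

definition increment :: "(real \<Rightarrow> real) \<Rightarrow> real \<Rightarrow> nat \<Rightarrow> real" where
  "increment w \<delta> l = w (real (Suc l) * \<delta>) - w (real l * \<delta>)"

lemma sum_increment_telescope:
  "m \<le> n \<Longrightarrow> (\<Sum>l\<in>{m..<n}. increment w \<delta> l) = w (real n * \<delta>) - w (real m * \<delta>)"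
  unfolding increment_def by (rule sum_Suc_diff')

lemma is_BM1_prob_space: "is_BM1 P B \<Longrightarrow> prob_space P"
  unfolding is_BM1_def by auto

lemma is_BM1_AE_zero: "is_BM1 P B \<Longrightarrow> AE \<omega> in P. B 0 \<omega> = 0"
  unfolding is_BM1_def by (auto elim: AE_mp)

lemma is_BM_coordinate: "is_BM P W \<Longrightarrow> is_BM1 P (\<lambda>t \<omega>. W t \<omega> $ i)"
  unfolding is_BM_def by blast

lemma measurable_increment [measurable]:
  "is_BM1 P B \<Longrightarrow> \<delta> \<ge> 0 \<Longrightarrow> (\<lambda>\<omega>. increment (\<lambda>t. B t \<omega>) \<delta> l) \<in> borel_measurable P"
  unfolding increment_def is_BM1_def by (intro borel_measurable_diff) auto

lemma distributed_increment:
  assumes "is_BM1 P B" "\<delta> > 0"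
  shows "distributed P lborel (\<lambda>\<omega>. increment (\<lambda>t. B t \<omega>) \<delta> l) (normal_density 0 (sqrt \<delta>))"
proof -
  have "distributed P lborel (\<lambda>\<omega>. B (real (Suc l) * \<delta>) \<omega> - B (real l * \<delta>) \<omega>)
          (normal_density 0 (sqrt (real (Suc l) * \<delta> - real l * \<delta>)))"
    using assms unfolding is_BM1_def by (auto intro!: mult_strict_right_mono)
  moreover have "real (Suc l) * \<delta> - real l * \<delta> = \<delta>" by (simp add: algebra_simps)
  ultimately show ?thesis unfolding increment_def by simp
qed

lemma indep_increments:
  assumes "is_BM1 P B" "\<delta> > 0"
  shows "prob_space.indep_vars P (\<lambda>_. borel) (\<lambda>l \<omega>. increment (\<lambda>t. B t \<omega>) \<delta> l) {..<n}"
proof -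
  have "\<forall>(n::nat) (ts::nat \<Rightarrow> real). 0 \<le> ts 0 \<longrightarrow> (\<forall>i<n. ts i < ts (Suc i)) \<longrightarrow>
        prob_space.indep_vars P (\<lambda>_. borel) (\<lambda>i \<omega>. B (ts (Suc i)) \<omega> - B (ts i) \<omega>) {..<n}"
    using assms(1) unfolding is_BM1_def by blast
  from this[rule_format, of "\<lambda>l. real l * \<delta>" n] show ?thesis
    using assms(2) unfolding increment_def by (auto intro!: mult_strict_right_mono)
qed

lemma distr_increments:
  assumes "is_BM1 P B" "\<delta> > 0" "n > 0"
  shows "distr P (Pi\<^sub>M {..<n} (\<lambda>_. borel)) (\<lambda>\<omega>. \<lambda>l\<in>{..<n}. increment (\<lambda>t. B t \<omega>) \<delta> l)
       = Pi\<^sub>M {..<n} (\<lambda>_. density lborel (normal_density 0 (sqrt \<delta>)))"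
proof -
  interpret prob_space P using is_BM1_prob_space[OF assms(1)] .
  have meas: "(\<lambda>\<omega>. increment (\<lambda>t. B t \<omega>) \<delta> l) \<in> borel_measurable P" for l
    using assms(1) less_imp_le[OF assms(2)] by measurable
  have ne: "{..<n} \<noteq> {}" using assms(3) by auto
  have "distr P (Pi\<^sub>M {..<n} (\<lambda>_. borel)) (\<lambda>\<omega>. \<lambda>l\<in>{..<n}. increment (\<lambda>t. B t \<omega>) \<delta> l)
       = Pi\<^sub>M {..<n} (\<lambda>l. distr P borel (\<lambda>\<omega>. increment (\<lambda>t. B t \<omega>) \<delta> l))"
    using indep_vars_iff_distr_eq_PiM[OF ne meas] indep_increments[OF assms(1,2), of n] by auto
  also have "\<dots> = Pi\<^sub>M {..<n} (\<lambda>_. density lborel (normal_density 0 (sqrt \<delta>)))"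
  proof (rule PiM_cong)
    fix l
    have "distr P borel (\<lambda>\<omega>. increment (\<lambda>t. B t \<omega>) \<delta> l) = distr P lborel (\<lambda>\<omega>. increment (\<lambda>t. B t \<omega>) \<delta> l)"
      by (rule distr_cong) auto
    then show "distr P borel (\<lambda>\<omega>. increment (\<lambda>t. B t \<omega>) \<delta> l) = density lborel (normal_density 0 (sqrt \<delta>))"
      using distributed_increment[OF assms(1,2)] by (simp add: distributed_def)
  qed simp
  finally show ?thesis .
qed

lemma distr_increment_lincomb_eq:
  fixes B :: "real \<Rightarrow> 'a \<Rightarrow> real" and Bt :: "real \<Rightarrow> 'b \<Rightarrow> real"
  assumes "is_BM1 P B" "is_BM1 Pt Bt" "\<delta> > 0"
  shows "distr P borel (\<lambda>\<omega>. \<Sum>l<n. a l * increment (\<lambda>t. B t \<omega>) \<delta> l)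
       = distr Pt borel (\<lambda>\<omega>. \<Sum>l<n. a l * increment (\<lambda>t. Bt t \<omega>) \<delta> l)"
proof (cases "n = 0")
  case True
  interpret P: prob_space P using is_BM1_prob_space[OF assms(1)] .
  interpret Pt: prob_space Pt using is_BM1_prob_space[OF assms(2)] .
  show ?thesis using True by simp
next
  case False
  define \<phi> where "\<phi> x = (\<Sum>l<n. a l * x l)" for x :: "nat \<Rightarrow> real"
  have [measurable]: "\<phi> \<in> borel_measurable (Pi\<^sub>M {..<n} (\<lambda>_. borel))"
    unfolding \<phi>_def by measurable
  have law: "distr M borel (\<lambda>\<omega>. \<Sum>l<n. a l * increment (\<lambda>t. X t \<omega>) \<delta> l)
      = distr (Pi\<^sub>M {..<n} (\<lambda>_. density lborel (normal_density 0 (sqrt \<delta>)))) borel \<phi>"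
    if "is_BM1 M X" for M and X :: "real \<Rightarrow> 'c \<Rightarrow> real"
  proof -
    have [measurable]: "(\<lambda>\<omega>. \<lambda>l\<in>{..<n}. increment (\<lambda>t. X t \<omega>) \<delta> l) \<in> measurable M (Pi\<^sub>M {..<n} (\<lambda>_. borel))"
      using that less_imp_le[OF assms(3)] by measurable
    have "distr M borel (\<lambda>\<omega>. \<Sum>l<n. a l * increment (\<lambda>t. X t \<omega>) \<delta> l)
        = distr M borel (\<lambda>\<omega>. \<phi> (\<lambda>l\<in>{..<n}. increment (\<lambda>t. X t \<omega>) \<delta> l))"
      by (rule distr_cong) (auto simp: \<phi>_def)
    also have "\<dots> = distr (distr M (Pi\<^sub>M {..<n} (\<lambda>_. borel)) (\<lambda>\<omega>. \<lambda>l\<in>{..<n}. increment (\<lambda>t. X t \<omega>) \<delta> l)) borel \<phi>"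
      by (rule distr_distr[symmetric, unfolded comp_def]) measurable
    also have "\<dots> = distr (Pi\<^sub>M {..<n} (\<lambda>_. density lborel (normal_density 0 (sqrt \<delta>)))) borel \<phi>"
      using False by (simp add: distr_increments[OF that assms(3)])
    finally show ?thesis .
  qed
  show ?thesis unfolding law[OF assms(1)] law[OF assms(2)] ..
qed

context
  fixes P :: "'a measure" and B :: "real \<Rightarrow> 'a \<Rightarrow> real" and \<delta> :: real
  assumes BM: "is_BM1 P B" and \<delta>: "\<delta> > 0"
begin

interpretation prob_space P using is_BM1_prob_space[OF BM] .

lemma integrable_increment: "integrable P (\<lambda>\<omega>. increment (\<lambda>t. B t \<omega>) \<delta> l)"
  using distributed_integrable_var[OF distributed_increment[OF BM \<delta>]] integrable_normal_moment_nz_1[of "sqrt \<delta>" 0] \<delta>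
  by auto

lemma integral_increment: "(\<integral>\<omega>. increment (\<lambda>t. B t \<omega>) \<delta> l \<partial>P) = 0"
  using normal_distributed_expectation[OF _ distributed_increment[OF BM \<delta>]] \<delta> by simp

lemma integrable_increment_mult:
  "integrable P (\<lambda>\<omega>. increment (\<lambda>t. B t \<omega>) \<delta> l * increment (\<lambda>t. B t \<omega>) \<delta> m)"
proof (cases "l = m")
  case True
  have "integrable lborel (\<lambda>x. normal_density 0 (sqrt \<delta>) x * x^2)"
    using integrable_normal_moment[of "sqrt \<delta>" 0 2] \<delta> by simp
  then show ?thesis
    using True distributed_integrable[OF distributed_increment[OF BM \<delta>], of "\<lambda>x. x^2"]
    by (simp add: power2_eq_square)
next
  case False
  have "indep_vars (\<lambda>_. borel) (\<lambda>l \<omega>. increment (\<lambda>t. B t \<omega>) \<delta> l) {l, m}"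
    by (rule indep_vars_subset[OF indep_increments[OF BM \<delta>, of "Suc (max l m)"]]) auto
  then show ?thesis
    using indep_vars_integrable[of "{l, m}" "\<lambda>l \<omega>. increment (\<lambda>t. B t \<omega>) \<delta> l"] integrable_increment False
    by simp
qed

lemma integral_increment_mult:
  "(\<integral>\<omega>. increment (\<lambda>t. B t \<omega>) \<delta> l * increment (\<lambda>t. B t \<omega>) \<delta> m \<partial>P) = (if l = m then \<delta> else 0)"
proof (cases "l = m")
  case True
  then show ?thesis
    using normal_distributed_variance[OF _ distributed_increment[OF BM \<delta>]] integral_increment \<delta>
    by (simp add: power2_eq_square)
next
  case False
  have "indep_vars (\<lambda>_. borel) (\<lambda>l \<omega>. increment (\<lambda>t. B t \<omega>) \<delta> l) {l, m}"
    by (rule indep_vars_subset[OF indep_increments[OF BM \<delta>, of "Suc (max l m)"]]) auto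
  then show ?thesis
    using indep_vars_lebesgue_integral[of "{l, m}" "\<lambda>l \<omega>. increment (\<lambda>t. B t \<omega>) \<delta> l"]
      integrable_increment integral_increment False
    by simp
qed

lemma integrable_increment_lincomb_sq:
  "integrable P (\<lambda>\<omega>. (\<Sum>l<n. a l * increment (\<lambda>t. B t \<omega>) \<delta> l)^2)"
  unfolding power2_eq_square sum_product using integrable_increment_mult
  by (auto simp: algebra_simps)

lemma integral_increment_lincomb_sq:
  "(\<integral>\<omega>. (\<Sum>l<n. a l * increment (\<lambda>t. B t \<omega>) \<delta> l)^2 \<partial>P) = \<delta> * (\<Sum>l<n. (a l)^2)"
proof -
  have "(\<integral>\<omega>. (\<Sum>l<n. a l * increment (\<lambda>t. B t \<omega>) \<delta> l)^2 \<partial>P)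
      = (\<Sum>l<n. \<Sum>m<n. a l * a m * (\<integral>\<omega>. increment (\<lambda>t. B t \<omega>) \<delta> l * increment (\<lambda>t. B t \<omega>) \<delta> m \<partial>P))"
    unfolding power2_eq_square sum_product using integrable_increment_mult
    by (simp add: Bochner_Integration.integral_sum algebra_simps)
  also have "\<dots> = \<delta> * (\<Sum>l<n. (a l)^2)"
    unfolding integral_increment_mult
    by (simp add: sum_distrib_left power2_eq_square if_distrib sum.delta algebra_simps cong: if_cong)
  finally show ?thesis .
qed

end

text \<open>Statistics of a Brownian path are handled as a.e. limits of linear combinations of its
  increments, in place of stochastic integrals: the same combinations for two Brownian motions have
  the same laws, and so do their limits.\<close>

lemma integral_eq_of_increment_approximations:
  fixes B :: "real \<Rightarrow> 'a \<Rightarrow> real" and Bt :: "real \<Rightarrow> 'b \<Rightarrow> real" and a :: "nat \<Rightarrow> nat \<Rightarrow> real"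
    and f :: "real \<Rightarrow> real"
  assumes BM: "is_BM1 P B" and BMt: "is_BM1 Pt Bt"
    and \<delta>: "\<And>r. \<delta> r \<ge> 0" "\<forall>\<^sub>F r in sequentially. \<delta> r > 0"
    and S: "S \<in> borel_measurable P" and St: "St \<in> borel_measurable Pt"
    and lim: "AE \<omega> in P. (\<lambda>r. \<Sum>l<n r. a r l * increment (\<lambda>t. B t \<omega>) (\<delta> r) l) \<longlonglongrightarrow> S \<omega> - m"
    and limt: "AE \<omega> in Pt. (\<lambda>r. \<Sum>l<n r. a r l * increment (\<lambda>t. Bt t \<omega>) (\<delta> r) l) \<longlonglongrightarrow> St \<omega> - mt"
    and f: "continuous_on UNIV f" "\<And>x. \<bar>f x\<bar> \<le> C"
  shows "(\<integral>\<omega>. f (S \<omega> - m) \<partial>P) = (\<integral>\<omega>. f (St \<omega> - mt) \<partial>Pt)"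
proof -
  define N where "N r \<omega> = (\<Sum>l<n r. a r l * increment (\<lambda>t. B t \<omega>) (\<delta> r) l)" for r \<omega>
  define Nt where "Nt r \<omega> = (\<Sum>l<n r. a r l * increment (\<lambda>t. Bt t \<omega>) (\<delta> r) l)" for r \<omega>
  have "prob_space P" "prob_space Pt" using is_BM1_prob_space[OF BM] is_BM1_prob_space[OF BMt] .
  moreover have "N r \<in> borel_measurable P" "Nt r \<in> borel_measurable Pt" for r
    unfolding N_def Nt_def using BM BMt \<delta>(1)[of r] by measurable
  moreover have "\<forall>\<^sub>F r in sequentially. distr P borel (N r) = distr Pt borel (Nt r)"
    using \<delta>(2) by eventually_elim (simp add: N_def[abs_def] Nt_def[abs_def] distr_increment_lincomb_eq[OF BM BMt])
  moreover have "(\<lambda>\<omega>. S \<omega> - m) \<in> borel_measurable P" "(\<lambda>\<omega>. St \<omega> - mt) \<in> borel_measurable Pt"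
    using S St by measurable
  moreover have "AE \<omega> in P. (\<lambda>r. N r \<omega>) \<longlonglongrightarrow> S \<omega> - m" "AE \<omega> in Pt. (\<lambda>r. Nt r \<omega>) \<longlonglongrightarrow> St \<omega> - mt"
    using lim limt unfolding N_def Nt_def .
  ultimately show ?thesis by (rule integral_eq_of_ae_limits_of_equal_laws[OF _ _ _ _ _ _ _ _ _ f])
qed

lemma softsign_gap_of_increment_approximations:
  fixes B :: "real \<Rightarrow> 'a \<Rightarrow> real" and Bt :: "real \<Rightarrow> 'b \<Rightarrow> real" and a :: "nat \<Rightarrow> nat \<Rightarrow> real"
  assumes BM: "is_BM1 P B" and BMt: "is_BM1 Pt Bt"
    and \<delta>: "\<And>r. \<delta> r \<ge> 0" "\<forall>\<^sub>F r in sequentially. \<delta> r > 0"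
    and S: "S \<in> borel_measurable P" and St: "St \<in> borel_measurable Pt"
    and lim: "AE \<omega> in P. (\<lambda>r. \<Sum>l<n r. a r l * increment (\<lambda>t. B t \<omega>) (\<delta> r) l) \<longlonglongrightarrow> S \<omega> - m"
    and limt: "AE \<omega> in Pt. (\<lambda>r. \<Sum>l<n r. a r l * increment (\<lambda>t. Bt t \<omega>) (\<delta> r) l) \<longlonglongrightarrow> St \<omega> - mt"
    and var: "\<forall>\<^sub>F r in sequentially. \<delta> r * (\<Sum>l<n r. (a r l)^2) \<le> \<sigma>^2"
    and \<sigma>: "\<sigma> > 0" and "m \<noteq> mt"
  shows "(10/81) * (\<bar>m - mt\<bar> / (\<sigma> + \<bar>m - mt\<bar>)) \<le>
     \<bar>(\<integral>\<omega>. softsign ((S \<omega> - (m + mt)/2) / (\<sigma> + \<bar>m - mt\<bar>)) \<partial>P)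
      - (\<integral>\<omega>. softsign ((St \<omega> - (m + mt)/2) / (\<sigma> + \<bar>m - mt\<bar>)) \<partial>Pt)\<bar>"
proof -
  define \<Delta> where "\<Delta> = \<bar>m - mt\<bar>"
  define mid where "mid = (m + mt)/2"
  define s where "s = \<sigma> + \<Delta>"
  have \<Delta>: "\<Delta> > 0" using \<open>m \<noteq> mt\<close> by (simp add: \<Delta>_def)
  interpret P: prob_space P using is_BM1_prob_space[OF BM] .
  define D where "D x = (\<integral>\<omega>. softsign ((S \<omega> - m + x) / s) \<partial>P)" for x
  have "continuous_on UNIV (\<lambda>y. softsign ((y + (mt - mid)) / s))"
    using \<sigma> \<Delta> by (intro continuous_on_compose2[OF continuous_on_softsign] continuous_intros) (auto simp: s_def)
  from integral_eq_of_increment_approximations[OF BM BMt \<delta> S St lim limt this abs_softsign_le_1]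
  have St_D: "(\<integral>\<omega>. softsign ((St \<omega> - mid) / s) \<partial>Pt) = D (mt - mid)"
    by (simp add: D_def)
  have S_D: "(\<integral>\<omega>. softsign ((S \<omega> - mid) / s) \<partial>P) = D (m - mid)"
    by (simp add: D_def)
  have gap: "(10/81) * (\<Delta>/s) \<le> D (\<Delta>/2) - D (-(\<Delta>/2))"
  proof -
    have N: "(\<lambda>\<omega>. \<Sum>l<n r. a r l * increment (\<lambda>t. B t \<omega>) (\<delta> r) l) \<in> borel_measurable P" for r
      using BM \<delta>(1)[of r] by measurable
    have Y: "(\<lambda>\<omega>. S \<omega> - m) \<in> borel_measurable P" using S by measurable
    have "\<forall>\<^sub>F r in sequentially. integrable P (\<lambda>\<omega>. (\<Sum>l<n r. a r l * increment (\<lambda>t. B t \<omega>) (\<delta> r) l)^2) \<and>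
        (\<integral>\<omega>. (\<Sum>l<n r. a r l * increment (\<lambda>t. B t \<omega>) (\<delta> r) l)^2 \<partial>P) \<le> \<sigma>^2"
      using \<delta>(2) var
      by eventually_elim (simp add: integrable_increment_lincomb_sq[OF BM] integral_increment_lincomb_sq[OF BM])
    from integral_softsign_shift_gap_limit[OF P.prob_space_axioms N Y lim this \<sigma> \<Delta>]
    show ?thesis unfolding D_def s_def by simp
  qed
  have "m - mid = \<Delta>/2 \<and> mt - mid = -(\<Delta>/2) \<or> m - mid = -(\<Delta>/2) \<and> mt - mid = \<Delta>/2"
    by (auto simp: \<Delta>_def mid_def abs_if field_simps)
  then have "\<bar>D (m - mid) - D (mt - mid)\<bar> = \<bar>D (\<Delta>/2) - D (-(\<Delta>/2))\<bar>"
  proof (elim disjE conjE)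
    assume h: "m - mid = \<Delta>/2" "mt - mid = -(\<Delta>/2)"
    show ?thesis unfolding h ..
  next
    assume h: "m - mid = -(\<Delta>/2)" "mt - mid = \<Delta>/2"
    show ?thesis unfolding h by (rule abs_minus_commute)
  qed
  then have "(10/81) * (\<Delta>/s) \<le> \<bar>(\<integral>\<omega>. softsign ((S \<omega> - mid) / s) \<partial>P) - (\<integral>\<omega>. softsign ((St \<omega> - mid) / s) \<partial>Pt)\<bar>"
    unfolding S_D St_D using gap by linarith
  then show ?thesis by (simp add: \<Delta>_def mid_def s_def)
qed

section \<open>Riemann sums and the variation of constants formula\<close>

lemma abs_integral_minus_left_rectangle_le:
  fixes f :: "real \<Rightarrow> real"
  assumes "continuous_on {a..b} f" "a \<le> b" "\<And>x. x \<in> {a..b} \<Longrightarrow> \<bar>f x - f a\<bar> \<le> e"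
  shows "\<bar>integral {a..b} f - (b - a) * f a\<bar> \<le> (b - a) * e"
proof -
  have i: "f integrable_on {a..b}" by (rule integrable_continuous_interval[OF assms(1)])
  have "integral {a..b} f - (b - a) * f a = integral {a..b} (\<lambda>x. f x - f a)"
    using integral_diff[OF i integrable_const_ivl, of "f a"] assms(2) by simp
  also have "\<bar>\<dots>\<bar> \<le> integral {a..b} (\<lambda>x. e)"
    using integral_norm_bound_integral[of "\<lambda>x. f x - f a" "{a..b}" "\<lambda>x. e"] i assms(3)
      integrable_diff[OF i integrable_const_ivl, of "f a"] integrable_const_ivl[of e a b]
    by auto
  also have "\<dots> = (b - a) * e" using assms(2) by simp
  finally show ?thesis .
qed

lemma abs_left_riemann_sum_minus_integral_le:
  fixes f :: "real \<Rightarrow> real"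
  assumes "continuous_on {0..real n * h} f" "h \<ge> 0"
    and "\<And>x y. x \<in> {0..real n * h} \<Longrightarrow> y \<in> {0..real n * h} \<Longrightarrow> \<bar>x - y\<bar> \<le> h \<Longrightarrow> \<bar>f x - f y\<bar> \<le> e"
  shows "\<bar>(\<Sum>m<n. h * f (real m * h)) - integral {0..real n * h} f\<bar> \<le> real n * h * e"
  using assms(1,3)
proof (induction n)
  case 0
  then show ?case by simp
next
  case (Suc k)
  have grid: "0 \<le> real k * h" "real k * h \<le> real (Suc k) * h" using assms(2) by (auto intro: mult_right_mono)
  have sub: "{0..real k * h} \<subseteq> {0..real (Suc k) * h}" "{real k * h..real (Suc k) * h} \<subseteq> {0..real (Suc k) * h}"
    using grid by auto
  have split: "integral {0..real (Suc k) * h} f = integral {0..real k * h} f + integral {real k * h..real (Suc k) * h} f"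
    using Henstock_Kurzweil_Integration.integral_combine[OF grid integrable_continuous_interval[OF Suc.prems(1)]] by simp
  have "\<bar>(\<Sum>m<k. h * f (real m * h)) - integral {0..real k * h} f\<bar> \<le> real k * h * e"
    using Suc.prems sub(1) by (intro Suc.IH) (auto intro: continuous_on_subset)
  moreover have "\<bar>integral {real k * h..real (Suc k) * h} f - h * f (real k * h)\<bar> \<le> h * e"
  proof -
    have step: "real (Suc k) * h - real k * h = h" by (simp add: algebra_simps)
    have "\<bar>f x - f (real k * h)\<bar> \<le> e" if x: "x \<in> {real k * h..real (Suc k) * h}" for x
    proof (rule Suc.prems(2))
      show "x \<in> {0..real (Suc k) * h}" "real k * h \<in> {0..real (Suc k) * h}" using x sub(2) grid by auto
      show "\<bar>x - real k * h\<bar> \<le> h" using x step by auto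
    qed
    then show ?thesis
      using abs_integral_minus_left_rectangle_le[of "real k * h" "real (Suc k) * h" f e]
        continuous_on_subset[OF Suc.prems(1) sub(2)] grid(2) unfolding step by blast
  qed
  ultimately show ?case
    unfolding split by (simp add: algebra_simps abs_le_iff)
qed

lemma tendsto_left_riemann_sum:
  fixes f :: "real \<Rightarrow> real"
  assumes cont: "continuous_on {0..T} f" and T: "T \<ge> 0"
  shows "(\<lambda>n. \<Sum>m<n. (T / real n) * f (real m * (T / real n))) \<longlonglongrightarrow> integral {0..T} f"
proof (rule LIMSEQ_I)
  fix \<epsilon> :: real assume \<epsilon>: "\<epsilon> > 0"
  define e where "e = \<epsilon> / (2 * (T + 1))"
  have e: "e > 0" using \<epsilon> T by (simp add: e_def)
  obtain d where d: "d > 0" "\<And>x y. x \<in> {0..T} \<Longrightarrow> y \<in> {0..T} \<Longrightarrow> dist y x < d \<Longrightarrow> dist (f y) (f x) < e"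
    using compact_uniformly_continuous[OF cont] e unfolding uniformly_continuous_on_def by (metis compact_Icc)
  obtain N :: nat where N: "N > T / d" using reals_Archimedean2 by blast
  show "\<exists>N. \<forall>n\<ge>N. norm ((\<Sum>m<n. (T / real n) * f (real m * (T / real n))) - integral {0..T} f) < \<epsilon>"
  proof (intro exI allI impI)
    fix n assume n: "n \<ge> Suc N"
    define h where "h = T / real n"
    have n_pos: "real n > 0" using n by simp
    have h: "h \<ge> 0" "real n * h = T" using T n_pos by (auto simp: h_def)
    have "T / d < real n" using N n by linarith
    then have "T < real n * d" using d(1) by (simp add: divide_less_eq)
    then have "h < d" unfolding h_def using n_pos by (simp add: divide_less_eq mult.commute)
    then have "\<bar>f x - f y\<bar> \<le> e" if "x \<in> {0..T}" "y \<in> {0..T}" "\<bar>x - y\<bar> \<le> h" for x y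
      using d(2)[OF that(2,1)] that(3) by (simp add: dist_real_def)
    then have "\<bar>(\<Sum>m<n. h * f (real m * h)) - integral {0..T} f\<bar> \<le> T * e"
      using abs_left_riemann_sum_minus_integral_le[of n h f e] cont h by simp
    also have "\<dots> = \<epsilon> * (T / (2 * (T + 1)))" unfolding e_def by (simp add: field_simps)
    also have "\<dots> < \<epsilon> * 1" using \<epsilon> T by (intro mult_strict_left_mono) (auto simp: field_simps)
    finally show "norm ((\<Sum>m<n. (T / real n) * f (real m * (T / real n))) - integral {0..T} f) < \<epsilon>"
      by (simp add: h_def mult.commute)
  qed
qed

lemma has_integral_exp_mult:
  fixes \<gamma> T :: real
  assumes "\<gamma> \<noteq> 0" "T \<ge> 0"
  shows "((\<lambda>s. exp (\<gamma> * s)) has_integral (exp (\<gamma> * T) - 1) / \<gamma>) {0..T}"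
proof -
  have "((\<lambda>u. exp (\<gamma> * u)) has_real_derivative exp (\<gamma> * x) * \<gamma>) (at x within {0..T})" for x
    by (rule derivative_eq_intros | simp)+
  then have "((\<lambda>u. exp (\<gamma> * u) / \<gamma>) has_real_derivative exp (\<gamma> * x) * \<gamma> / \<gamma>) (at x within {0..T})" for x
    by (rule DERIV_cdivide)
  then have "((\<lambda>u. exp (\<gamma> * u) / \<gamma>) has_vector_derivative exp (\<gamma> * x)) (at x within {0..T})" for x
    using assms(1) by (simp add: has_real_derivative_iff_has_vector_derivative)
  from fundamental_theorem_of_calculus[OF assms(2) this] show ?thesis
    by (simp add: diff_divide_distrib)
qed

text \<open>Variation of constants for \<open>V t = v0 - \<gamma> \<integral>\<^sub>0\<^sup>t V + c w t\<close>: the primitive \<open>Y\<close> of \<open>V\<close>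
  satisfies \<open>(exp (\<gamma> t) Y t)' = exp (\<gamma> t) (v0 + c w t)\<close>, so no derivative of \<open>w\<close> is needed.\<close>

lemma integral_equation_solution:
  fixes V w :: "real \<Rightarrow> real" and \<gamma> c v0 T :: real
  assumes \<gamma>: "\<gamma> > 0" and T: "T \<ge> 0"
    and cV: "continuous_on {0..T} V" and cw: "continuous_on {0..T} w"
    and eq: "\<And>t. 0 \<le> t \<Longrightarrow> t \<le> T \<Longrightarrow> V t = v0 - \<gamma> * integral {0..t} V + c * w t"
  shows "V T = exp (-\<gamma> * T) * v0 + c * (w T - \<gamma> * exp (-\<gamma> * T) * integral {0..T} (\<lambda>s. exp (\<gamma> * s) * w s))"
proof -
  define Y where "Y u = integral {0..u} V" for u
  define I where "I = integral {0..T} (\<lambda>s. exp (\<gamma> * s) * w s)"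
  have dY: "(Y has_real_derivative V x) (at x within {0..T})" if "x \<in> {0..T}" for x
    using integral_has_vector_derivative[OF cV that] unfolding Y_def
    by (simp add: has_real_derivative_iff_has_vector_derivative)
  have "((\<lambda>u. exp (\<gamma> * u) * Y u) has_vector_derivative exp (\<gamma> * x) * (v0 + c * w x)) (at x within {0..T})"
    if x: "x \<in> {0..T}" for x
  proof -
    have "((\<lambda>u. exp (\<gamma> * u) * Y u) has_real_derivative exp (\<gamma> * x) * \<gamma> * Y x + exp (\<gamma> * x) * V x)
        (at x within {0..T})"
      by (rule derivative_eq_intros dY[OF x] | simp)+
    moreover have "V x + \<gamma> * Y x = v0 + c * w x" using eq[of x] x unfolding Y_def by simp
    moreover have "exp (\<gamma> * x) * \<gamma> * Y x + exp (\<gamma> * x) * V x = exp (\<gamma> * x) * (V x + \<gamma> * Y x)"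
      by (simp add: algebra_simps)
    ultimately show ?thesis by (simp add: has_real_derivative_iff_has_vector_derivative)
  qed
  from fundamental_theorem_of_calculus[OF T this]
  have lhs: "((\<lambda>s. v0 * exp (\<gamma> * s) + c * (exp (\<gamma> * s) * w s)) has_integral exp (\<gamma> * T) * Y T) {0..T}"
    by (simp add: Y_def algebra_simps)
  have "continuous_on {0..T} (\<lambda>s. exp (\<gamma> * s) * w s)"
    by (intro continuous_intros cw)
  then have "((\<lambda>s. exp (\<gamma> * s) * w s) has_integral I) {0..T}"
    unfolding I_def by (intro integrable_integral integrable_continuous_interval)
  then have "((\<lambda>s. v0 * exp (\<gamma> * s) + c * (exp (\<gamma> * s) * w s)) has_integral v0 * ((exp (\<gamma> * T) - 1) / \<gamma>) + c * I) {0..T}"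
    using has_integral_exp_mult[of \<gamma> T] \<gamma> T by (intro has_integral_add has_integral_mult_right) auto
  then have "exp (\<gamma> * T) * Y T = v0 * ((exp (\<gamma> * T) - 1) / \<gamma>) + c * I"
    using has_integral_unique[OF lhs] by simp
  then have "\<gamma> * Y T = v0 * (1 - exp (-\<gamma> * T)) + c * \<gamma> * exp (-\<gamma> * T) * I"
    using \<gamma> by (simp add: exp_minus field_simps)
  moreover have "V T = v0 - \<gamma> * Y T + c * w T" using eq[of T] T unfolding Y_def by simp
  ultimately show ?thesis unfolding I_def by (simp add: algebra_simps)
qed

section \<open>Discretising the velocity statistic\<close>

lemma sum_mult_partial_sums_swap:
  fixes e D :: "nat \<Rightarrow> 'a::comm_semiring_0"
  shows "(\<Sum>m<n. e m * (\<Sum>l<m. D l)) = (\<Sum>l<n. (\<Sum>m\<in>{Suc l..<n}. e m) * D l)"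
proof (induction n)
  case 0
  then show ?case by simp
next
  case (Suc n)
  have "(\<Sum>l<Suc n. (\<Sum>m\<in>{Suc l..<Suc n}. e m) * D l) = (\<Sum>l<n. (\<Sum>m\<in>{Suc l..<Suc n}. e m) * D l)"
    by simp
  also have "\<dots> = (\<Sum>l<n. (\<Sum>m\<in>{Suc l..<n}. e m) * D l + e n * D l)"
    by (intro sum.cong refl) (simp add: algebra_simps)
  also have "\<dots> = (\<Sum>l<n. (\<Sum>m\<in>{Suc l..<n}. e m) * D l) + e n * (\<Sum>l<n. D l)"
    by (simp add: sum.distrib sum_distrib_left)
  finally show ?case using Suc.IH by simp
qed

lemma div_eq_on_block: "r > 0 \<Longrightarrow> l \<in> {j*r..<j*r+r} \<Longrightarrow> l div r = (j::nat)"
  by (auto simp: div_nat_eqI mult.commute)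

text \<open>\<open>\<Sum>\<^sub>l approx_coef \<gamma> c b h k r l * \<Delta>\<^sub>l w\<close>, with \<open>\<Delta>\<^sub>l w\<close> the increments of \<open>w\<close> on the grid of mesh
  \<open>h/r\<close>, is the summation by parts of a Riemann sum for
  \<open>c (w T - \<gamma> exp (-\<gamma> T) \<integral>\<^sub>0\<^sup>T exp (\<gamma> s) w s ds) - b c \<Sum>\<^sub>j exp (-\<gamma> (T - (j+1) h)) (w ((j+1) h) - w (j h))\<close>
  with \<open>T = k h\<close>; see \<open>approx_coef_sum_eq\<close>.\<close>

definition approx_coef :: "real \<Rightarrow> real \<Rightarrow> real \<Rightarrow> real \<Rightarrow> nat \<Rightarrow> nat \<Rightarrow> nat \<Rightarrow> real" where
  "approx_coef \<gamma> c b h k r l = c * (1 - \<gamma> * exp (-\<gamma> * (real k * h)) *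
      (\<Sum>m\<in>{Suc l..<k*r}. (h / real r) * exp (\<gamma> * (real m * (h / real r))))
      - b * exp (-\<gamma> * (real k * h - real (Suc (l div r)) * h)))"

lemma approx_coef_sum_eq:
  fixes w :: "real \<Rightarrow> real" and h :: real
  assumes w0: "w 0 = 0" and r: "r > 0"
  defines "\<delta> \<equiv> h / real r"
  shows "(\<Sum>l<k*r. approx_coef \<gamma> c b h k r l * increment w \<delta> l)
    = c * (w (real k * h) - \<gamma> * exp (-\<gamma> * (real k * h)) *
          (\<Sum>m<k*r. \<delta> * exp (\<gamma> * (real m * \<delta>)) * w (real m * \<delta>))
       - b * (\<Sum>j<k. exp (-\<gamma> * (real k * h - real (Suc j) * h)) * (w (real (Suc j) * h) - w (real j * h))))"
proof -
  define n where "n = k * r"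
  define e where "e m = \<delta> * exp (\<gamma> * (real m * \<delta>))" for m
  define E where "E j = exp (-\<gamma> * (real k * h - real (Suc j) * h))" for j
  have grid: "real (j * r) * \<delta> = real j * h" "real (j * r + r) * \<delta> = real (Suc j) * h" for j
    using r by (simp_all add: \<delta>_def field_simps)
  have partial: "(\<Sum>l<m. increment w \<delta> l) = w (real m * \<delta>)" for m
    using sum_increment_telescope[of 0 m w \<delta>] w0 by (simp add: atLeast0LessThan)
  have riemann: "(\<Sum>l<n. (\<Sum>m\<in>{Suc l..<n}. e m) * increment w \<delta> l) = (\<Sum>m<n. e m * w (real m * \<delta>))"
    unfolding sum_mult_partial_sums_swap[symmetric] partial ..
  have blocks: "(\<Sum>l<n. E (l div r) * increment w \<delta> l) = (\<Sum>j<k. E j * (w (real (Suc j) * h) - w (real j * h)))"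
  proof -
    have "(\<Sum>l<n. E (l div r) * increment w \<delta> l) = (\<Sum>j<k. E j * (\<Sum>l\<in>{j*r..<j*r+r}. increment w \<delta> l))"
      unfolding n_def sum.nat_group[symmetric] using div_eq_on_block[OF r] by (simp add: sum_distrib_left)
    also have "\<dots> = (\<Sum>j<k. E j * (w (real (Suc j) * h) - w (real j * h)))"
      using sum_increment_telescope[of "j*r" "j*r+r" w \<delta> for j] unfolding grid by simp
    finally show ?thesis .
  qed
  have "(\<Sum>l<n. approx_coef \<gamma> c b h k r l * increment w \<delta> l)
      = c * ((\<Sum>l<n. increment w \<delta> l) - \<gamma> * exp (-\<gamma> * (real k * h)) * (\<Sum>l<n. (\<Sum>m\<in>{Suc l..<n}. e m) * increment w \<delta> l)
             - b * (\<Sum>l<n. E (l div r) * increment w \<delta> l))"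
    unfolding approx_coef_def e_def E_def \<delta>_def n_def
    by (simp add: algebra_simps sum_distrib_left sum_subtractf sum.distrib)
  also have "\<dots> = c * (w (real k * h) - \<gamma> * exp (-\<gamma> * (real k * h)) * (\<Sum>m<n. e m * w (real m * \<delta>))
             - b * (\<Sum>j<k. E j * (w (real (Suc j) * h) - w (real j * h))))"
    unfolding partial riemann blocks unfolding n_def grid(1) ..
  finally show ?thesis unfolding e_def E_def n_def by (simp add: mult.assoc)
qed

lemma tendsto_approx_coef_sum:
  fixes w :: "real \<Rightarrow> real"
  assumes w0: "w 0 = 0" and cont: "continuous_on {0..real k * h} w" and k: "k > 0" and h: "h > 0"
  shows "(\<lambda>r. \<Sum>l<k*r. approx_coef \<gamma> c b h k r l * increment w (h / real r) l) \<longlonglongrightarrow>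
     c * (w (real k * h) - \<gamma> * exp (-\<gamma> * (real k * h)) * integral {0..real k * h} (\<lambda>s. exp (\<gamma> * s) * w s)
       - b * (\<Sum>j<k. exp (-\<gamma> * (real k * h - real (Suc j) * h)) * (w (real (Suc j) * h) - w (real j * h))))"
proof -
  define T where "T = real k * h"
  define f where "f s = exp (\<gamma> * s) * w s" for s
  define R where "R n = (\<Sum>m<n. (T / real n) * f (real m * (T / real n)))" for n
  have "continuous_on {0..T} f" unfolding f_def T_def by (intro continuous_intros cont)
  then have "R \<longlonglongrightarrow> integral {0..T} f"
    unfolding R_def by (rule tendsto_left_riemann_sum) (use h in \<open>simp add: T_def\<close>)
  moreover have "strict_mono (\<lambda>r. k * r)" using k by (auto simp: strict_mono_def)
  ultimately have "(\<lambda>r. R (k * r)) \<longlonglongrightarrow> integral {0..T} f"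
    using LIMSEQ_subseq_LIMSEQ by (auto simp: comp_def)
  then have "(\<lambda>r. c * (w T - \<gamma> * exp (-\<gamma> * T) * R (k * r)
       - b * (\<Sum>j<k. exp (-\<gamma> * (T - real (Suc j) * h)) * (w (real (Suc j) * h) - w (real j * h)))))
      \<longlonglongrightarrow> c * (w T - \<gamma> * exp (-\<gamma> * T) * integral {0..T} f
       - b * (\<Sum>j<k. exp (-\<gamma> * (T - real (Suc j) * h)) * (w (real (Suc j) * h) - w (real j * h))))"
    by (intro tendsto_intros)
  moreover have "\<forall>\<^sub>F r in sequentially. c * (w T - \<gamma> * exp (-\<gamma> * T) * R (k * r)
       - b * (\<Sum>j<k. exp (-\<gamma> * (T - real (Suc j) * h)) * (w (real (Suc j) * h) - w (real j * h))))
      = (\<Sum>l<k*r. approx_coef \<gamma> c b h k r l * increment w (h / real r) l)"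
  proof (rule eventually_sequentiallyI[of 1])
    fix r :: nat assume "r \<ge> 1"
    then have r: "r > 0" by simp
    have "T / real (k*r) = h / real r" using k r by (simp add: T_def)
    then show "c * (w T - \<gamma> * exp (-\<gamma> * T) * R (k * r)
       - b * (\<Sum>j<k. exp (-\<gamma> * (T - real (Suc j) * h)) * (w (real (Suc j) * h) - w (real j * h))))
      = (\<Sum>l<k*r. approx_coef \<gamma> c b h k r l * increment w (h / real r) l)"
      unfolding approx_coef_sum_eq[where w=w, OF w0 r] R_def by (simp add: T_def f_def mult.assoc)
  qed
  ultimately show ?thesis unfolding T_def f_def by (rule Lim_transform_eventually)
qed

section \<open>Second moments of the discretised statistic\<close>

lemma one_minus_exp_neg_le: "x \<ge> 0 \<Longrightarrow> 1 - exp (-x) \<le> (x::real)"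
  using exp_ge_add_one_self[of "-x"] by simp

lemma one_minus_exp_neg_ge: "x > 0 \<Longrightarrow> x / (1 + x) \<le> 1 - exp (-(x::real))"
proof -
  assume x: "x > 0"
  have "1 + x \<le> exp x" by (rule exp_ge_add_one_self)
  then have "exp (-x) \<le> 1 / (1 + x)" using x by (simp add: exp_minus divide_simps)
  moreover have "1 - 1 / (1 + x) = x / (1 + x)" using x by (simp add: field_simps)
  ultimately show ?thesis by linarith
qed

lemma sum_exp_neg_mult_le:
  fixes a :: real assumes a: "a > 0"
  shows "(\<Sum>i<n. exp (-a * real i)) \<le> (1 + a) / a"
proof -
  have q: "0 < exp (-a)" "exp (-a) < 1" using a by auto
  have "(\<Sum>i<n. exp (-a * real i)) = (\<Sum>i<n. exp (-a) ^ i)"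
    by (simp add: exp_of_nat_mult[symmetric] mult.commute)
  also have "\<dots> < 1 / (1 - exp (-a))" by (rule geometric_sum_less[OF q]) simp
  also have "\<dots> \<le> 1 / (a / (1 + a))"
    using one_minus_exp_neg_ge[OF a] a by (intro divide_left_mono) auto
  also have "\<dots> = (1 + a) / a" by simp
  finally show ?thesis by simp
qed

lemma riemann_weight_bounds:
  fixes \<gamma> \<delta> T :: real
  assumes g: "\<gamma> > 0" and d: "\<delta> > 0" and l: "l < n" and T: "T = real n * \<delta>"
  defines "A \<equiv> \<gamma> * exp (-\<gamma> * T) * (\<Sum>m\<in>{Suc l..<n}. \<delta> * exp (\<gamma> * (real m * \<delta>)))"
  defines "u \<equiv> exp (-\<gamma> * (T - real (Suc l) * \<delta>))"
  shows "exp (-\<gamma> * \<delta>) * (1 - u) \<le> A" "A \<le> 1 - u"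
proof -
  define g' where "g' m = exp (\<gamma> * (real m * \<delta>))" for m
  have tel: "(\<Sum>m\<in>{Suc l..<n}. g' (Suc m) - g' m) = g' n - g' (Suc l)"
    by (rule sum_Suc_diff') (use l in simp)
  have up: "\<gamma> * (\<delta> * g' m) \<le> g' (Suc m) - g' m" for m
  proof -
    have e1: "g' (Suc m) = g' m * exp (\<gamma> * \<delta>)" by (simp add: g'_def exp_add[symmetric] algebra_simps)
    have e2: "\<gamma> * \<delta> \<le> exp (\<gamma> * \<delta>) - 1" using exp_ge_add_one_self[of "\<gamma> * \<delta>"] by linarith
    have e3: "g' m > 0" by (simp add: g'_def)
    have "g' m * (\<gamma> * \<delta>) \<le> g' m * (exp (\<gamma> * \<delta>) - 1)"
      using e2 e3 by (intro mult_left_mono) auto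
    moreover have "g' (Suc m) - g' m = g' m * (exp (\<gamma> * \<delta>) - 1)" using e1 by (simp add: algebra_simps)
    ultimately show ?thesis by (simp add: algebra_simps)
  qed
  have lo: "exp (-\<gamma> * \<delta>) * (g' (Suc m) - g' m) \<le> \<gamma> * (\<delta> * g' m)" for m
  proof -
    have "exp (-\<gamma> * \<delta>) * (g' (Suc m) - g' m) = g' m * (1 - exp (-(\<gamma> * \<delta>)))"
      by (simp add: g'_def algebra_simps exp_add[symmetric])
    also have "\<dots> \<le> g' m * (\<gamma> * \<delta>)"
      using one_minus_exp_neg_le[of "\<gamma> * \<delta>"] g d by (intro mult_left_mono) (auto simp: g'_def)
    finally show ?thesis by (simp add: algebra_simps)
  qed
  have A_eq: "A = exp (-\<gamma> * T) * (\<Sum>m\<in>{Suc l..<n}. \<gamma> * (\<delta> * g' m))"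
    unfolding A_def g'_def by (simp add: sum_distrib_left algebra_simps)
  have G: "exp (-\<gamma> * T) * (g' n - g' (Suc l)) = 1 - u"
    unfolding g'_def u_def T by (simp add: algebra_simps exp_add[symmetric] exp_diff)
  have "A \<le> exp (-\<gamma> * T) * (\<Sum>m\<in>{Suc l..<n}. g' (Suc m) - g' m)"
    unfolding A_eq by (intro mult_left_mono sum_mono up) auto
  then show "A \<le> 1 - u" using tel G by simp
  have "exp (-\<gamma> * \<delta>) * (1 - u) = exp (-\<gamma> * T) * (\<Sum>m\<in>{Suc l..<n}. exp (-\<gamma> * \<delta>) * (g' (Suc m) - g' m))"
  proof -
    have "exp (-\<gamma> * \<delta>) * (1 - u) = exp (-\<gamma> * \<delta>) * (exp (-\<gamma> * T) * (\<Sum>m\<in>{Suc l..<n}. g' (Suc m) - g' m))"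
      using tel G by simp
    also have "\<dots> = exp (-\<gamma> * T) * (\<Sum>m\<in>{Suc l..<n}. exp (-\<gamma> * \<delta>) * (g' (Suc m) - g' m))"
      by (simp only: sum_distrib_left mult.left_commute)
    finally show ?thesis .
  qed
  also have "\<dots> \<le> A"
    unfolding A_eq by (intro mult_left_mono sum_mono lo) auto
  finally show "exp (-\<gamma> * \<delta>) * (1 - u) \<le> A" .
qed

lemma one_minus_riemann_weight_bounds:
  fixes \<gamma> h :: real
  assumes \<gamma>: "\<gamma> > 0" and h: "h > 0" and r: "r > 0" and l: "l < k * r"
  defines "\<delta> \<equiv> h / real r"
  defines "u \<equiv> exp (-\<gamma> * (real k * h - real (Suc l) * \<delta>))"
  defines "A \<equiv> \<gamma> * exp (-\<gamma> * (real k * h)) * (\<Sum>m\<in>{Suc l..<k*r}. \<delta> * exp (\<gamma> * (real m * \<delta>)))"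
  shows "u \<le> 1 - A" "1 - A \<le> \<gamma> * \<delta> + u"
proof -
  have \<delta>: "\<delta> > 0" using h r by (simp add: \<delta>_def)
  have T: "real k * h = real (k*r) * \<delta>" using r by (simp add: \<delta>_def)
  note weight = riemann_weight_bounds[OF \<gamma> \<delta> l T]
  show "u \<le> 1 - A" using weight(2) unfolding A_def u_def by simp
  have "1 - A \<le> (1 - exp (-(\<gamma> * \<delta>))) + exp (-\<gamma> * \<delta>) * u"
    using weight(1) unfolding A_def u_def by (simp add: algebra_simps)
  also have "\<dots> \<le> \<gamma> * \<delta> + 1 * u"
    using \<gamma> \<delta> by (intro add_mono mult_right_mono one_minus_exp_neg_le) (auto simp: u_def)
  finally show "1 - A \<le> \<gamma> * \<delta> + u" by simp
qed

lemma sum_exp_decay_sq_le: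
  fixes \<gamma> \<delta> :: real
  assumes g: "\<gamma> > 0" and d: "\<delta> > 0"
  shows "\<delta> * (\<Sum>l<n. (exp (-\<gamma> * (real n * \<delta> - real (Suc l) * \<delta>)))^2) \<le> (1 + 2*\<gamma>*\<delta>) / (2*\<gamma>)"
proof -
  have "(\<Sum>l<n. (exp (-\<gamma> * (real n * \<delta> - real (Suc l) * \<delta>)))^2) = (\<Sum>l<n. exp (-(2*\<gamma>*\<delta>) * real (n - Suc l)))"
  proof (intro sum.cong refl)
    fix l assume "l \<in> {..<n}"
    then have "real (n - Suc l) = real n - real (Suc l)" by (simp add: of_nat_diff)
    then show "(exp (-\<gamma> * (real n * \<delta> - real (Suc l) * \<delta>)))^2 = exp (-(2*\<gamma>*\<delta>) * real (n - Suc l))"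
      by (simp add: exp_double[symmetric] power2_eq_square exp_add[symmetric] algebra_simps)
  qed
  also have "\<dots> = (\<Sum>i<n. exp (-(2*\<gamma>*\<delta>) * real i))"
    by (rule sum.nat_diff_reindex)
  also have "\<dots> \<le> (1 + 2*\<gamma>*\<delta>) / (2*\<gamma>*\<delta>)"
    by (rule sum_exp_neg_mult_le) (use g d in simp)
  finally have "\<delta> * (\<Sum>l<n. (exp (-\<gamma> * (real n * \<delta> - real (Suc l) * \<delta>)))^2) \<le> \<delta> * ((1 + 2*\<gamma>*\<delta>) / (2*\<gamma>*\<delta>))"
    using d by (intro mult_left_mono) auto
  also have "\<dots> = (1 + 2*\<gamma>*\<delta>) / (2*\<gamma>)" using d g by (simp add: field_simps)
  finally show ?thesis .
qed

lemma sum_approx_coef_sq_le_plain: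
  fixes \<gamma> h c :: real
  assumes \<gamma>: "\<gamma> > 0" and h: "h > 0" and r: "r > 0"
  shows "(h / real r) * (\<Sum>l<k*r. (approx_coef \<gamma> c 0 h k r l)^2)
     \<le> 2 * c^2 * (\<gamma>^2 * (h / real r)^2 * (real k * h) + (1 + 2*\<gamma>*(h / real r)) / (2*\<gamma>))"
proof -
  define \<delta> where "\<delta> = h / real r"
  define n where "n = k * r"
  have \<delta>: "\<delta> > 0" using h r by (simp add: \<delta>_def)
  have T: "real k * h = real n * \<delta>" using r by (simp add: \<delta>_def n_def)
  define u where "u l = exp (-\<gamma> * (real k * h - real (Suc l) * \<delta>))" for l
  have each: "(approx_coef \<gamma> c 0 h k r l)^2 \<le> 2 * c^2 * (\<gamma>^2 * \<delta>^2 + (u l)^2)" if l: "l < n" for l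
  proof -
    define A where "A = \<gamma> * exp (-\<gamma> * (real k * h)) * (\<Sum>m\<in>{Suc l..<k*r}. \<delta> * exp (\<gamma> * (real m * \<delta>)))"
    have coef: "approx_coef \<gamma> c 0 h k r l = c * (1 - A)"
      unfolding approx_coef_def A_def \<delta>_def by simp
    have "u l \<le> 1 - A" "1 - A \<le> \<gamma> * \<delta> + u l" "0 \<le> u l"
      using one_minus_riemann_weight_bounds[OF \<gamma> h r l[unfolded n_def]] unfolding A_def u_def \<delta>_def by auto
    then have "(1 - A)^2 \<le> (\<gamma> * \<delta> + u l)^2"
      by (intro power_mono) auto
    also have "\<dots> \<le> 2 * (\<gamma>^2 * \<delta>^2 + (u l)^2)"
      using zero_le_power2[of "\<gamma> * \<delta> - u l"] by (simp add: power2_eq_square algebra_simps)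
    finally have "c^2 * (1 - A)^2 \<le> c^2 * (2 * (\<gamma>^2 * \<delta>^2 + (u l)^2))"
      by (intro mult_left_mono) auto
    then show ?thesis
      unfolding coef power_mult_distrib by (simp add: algebra_simps)
  qed
  have "\<delta> * (\<Sum>l<n. (approx_coef \<gamma> c 0 h k r l)^2) \<le> \<delta> * (\<Sum>l<n. 2 * c^2 * (\<gamma>^2 * \<delta>^2 + (u l)^2))"
    using \<delta> each by (intro mult_left_mono sum_mono) auto
  also have "\<dots> = 2 * c^2 * (\<gamma>^2 * \<delta>^2 * (real n * \<delta>) + \<delta> * (\<Sum>l<n. (u l)^2))"
    by (simp add: sum.distrib sum_distrib_left algebra_simps)
  also have "\<dots> \<le> 2 * c^2 * (\<gamma>^2 * \<delta>^2 * (real n * \<delta>) + (1 + 2*\<gamma>*\<delta>) / (2*\<gamma>))"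
    using sum_exp_decay_sq_le[OF \<gamma> \<delta>, of n] unfolding u_def T by (intro mult_left_mono add_left_mono) auto
  finally show ?thesis unfolding \<delta>_def n_def T[unfolded \<delta>_def n_def, symmetric] .
qed

lemma grid_point_in_block:
  fixes h :: real
  assumes "h > 0" "r > 0"
  shows "real (l div r) * h \<le> real (Suc l) * (h / real r)" "real (Suc l) * (h / real r) \<le> real (Suc (l div r)) * h"
proof -
  have "l div r * r \<le> Suc l"
    by (metis div_times_less_eq_dividend le_SucI)
  moreover have "Suc l \<le> Suc (l div r) * r" using assms(2)
    by (metis Suc_leI div_mult_mod_eq mod_less_divisor mult_Suc add.commute add_less_cancel_left mult.commute)
  ultimately have le: "real (l div r) * real r \<le> real (Suc l)" "real (Suc l) \<le> real (Suc (l div r)) * real r"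
    by (simp_all only: of_nat_mult[symmetric] of_nat_le_iff)
  have "real (l div r) * h = real (l div r) * real r * (h / real r)" using assms by simp
  also have "\<dots> \<le> real (Suc l) * (h / real r)" using le(1) assms by (intro mult_right_mono) auto
  finally show "real (l div r) * h \<le> real (Suc l) * (h / real r)" .
  have "real (Suc l) * (h / real r) \<le> real (Suc (l div r)) * real r * (h / real r)"
    using le(2) assms by (intro mult_right_mono) auto
  also have "\<dots> = real (Suc (l div r)) * h" using assms by simp
  finally show "real (Suc l) * (h / real r) \<le> real (Suc (l div r)) * h" .
qed

text \<open>Subtracting the \<open>b = 1\<close> term cancels the coefficient up to \<open>O(h)\<close>: the first part is within
  \<open>\<gamma> h/r\<close> of \<open>exp (-\<gamma> (k h - (l+1) h/r))\<close>, which differs from the block value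
  \<open>exp (-\<gamma> (k h - (l div r + 1) h))\<close> by a factor \<open>exp (-\<gamma> x)\<close> with \<open>0 \<le> x \<le> h\<close>.\<close>

lemma approx_coef_compensated_sq_le:
  fixes \<gamma> h c :: real
  assumes \<gamma>: "\<gamma> > 0" and h: "h > 0" and r: "r > 0" and l: "l < k * r"
  defines "E \<equiv> exp (-\<gamma> * (real k * h - real (Suc (l div r)) * h))"
  shows "(approx_coef \<gamma> c 1 h k r l)^2 \<le> 2 * c^2 * (\<gamma>^2 * (h / real r)^2 + \<gamma>^2 * h^2 * E^2)"
proof -
  define \<delta> where "\<delta> = h / real r"
  define A where "A = \<gamma> * exp (-\<gamma> * (real k * h)) * (\<Sum>m\<in>{Suc l..<k*r}. \<delta> * exp (\<gamma> * (real m * \<delta>)))"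
  define u where "u = exp (-\<gamma> * (real k * h - real (Suc l) * \<delta>))"
  have coef: "approx_coef \<gamma> c 1 h k r l = c * (1 - A - E)"
    unfolding approx_coef_def A_def E_def \<delta>_def by simp
  have bounds: "u \<le> 1 - A" "1 - A \<le> \<gamma> * \<delta> + u"
    using one_minus_riemann_weight_bounds[OF \<gamma> h r l] unfolding A_def u_def \<delta>_def by auto
  have \<delta>: "\<delta> > 0" using h r by (simp add: \<delta>_def)
  define x where "x = real (Suc (l div r)) * h - real (Suc l) * \<delta>"
  have x: "0 \<le> x" "x \<le> h"
    using grid_point_in_block[OF h r, of l] unfolding x_def \<delta>_def by (auto simp: algebra_simps)
  have uE: "u = E * exp (-(\<gamma> * x))"
    unfolding u_def E_def x_def by (simp add: exp_add[symmetric] algebra_simps)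
  have E: "E > 0" by (simp add: E_def)
  have "u \<le> E" unfolding uE using E \<gamma> x by (simp add: mult_le_cancel_left1)
  moreover have "E - u \<le> \<gamma> * h * E"
  proof -
    have "E - u = E * (1 - exp (-(\<gamma> * x)))" unfolding uE by (simp add: algebra_simps)
    also have "\<dots> \<le> E * (\<gamma> * x)" using E \<gamma> x by (intro mult_left_mono one_minus_exp_neg_le) auto
    also have "\<dots> \<le> E * (\<gamma> * h)" using E \<gamma> x by (intro mult_left_mono) auto
    finally show ?thesis by (simp add: algebra_simps)
  qed
  moreover have "0 \<le> \<gamma> * \<delta>" "0 \<le> \<gamma> * h * E" using \<gamma> \<delta> h E by auto
  ultimately have "1 - A - E \<le> \<gamma> * \<delta> + \<gamma> * h * E" "-(1 - A - E) \<le> \<gamma> * \<delta> + \<gamma> * h * E"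
    using bounds by linarith+
  then have "\<bar>1 - A - E\<bar> \<le> \<gamma> * \<delta> + \<gamma> * h * E"
    by (simp only: abs_le_iff)
  then have "(1 - A - E)^2 \<le> (\<gamma> * \<delta> + \<gamma> * h * E)^2"
    by (metis abs_ge_zero order_trans power2_abs power_mono)
  also have "\<dots> \<le> 2 * (\<gamma>^2 * \<delta>^2 + \<gamma>^2 * h^2 * E^2)"
    using zero_le_power2[of "\<gamma> * \<delta> - \<gamma> * h * E"] by (simp add: power2_eq_square algebra_simps)
  finally have "c^2 * (1 - A - E)^2 \<le> c^2 * (2 * (\<gamma>^2 * \<delta>^2 + \<gamma>^2 * h^2 * E^2))"
    by (intro mult_left_mono) auto
  then show ?thesis
    unfolding coef power_mult_distrib \<delta>_def by (simp add: algebra_simps)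
qed

lemma sum_div_eq_mult_sum:
  fixes g :: "nat \<Rightarrow> real"
  assumes "r > 0"
  shows "(\<Sum>l<k*r. g (l div r)) = real r * (\<Sum>j<k. g j)"
proof -
  have "(\<Sum>l<k*r. g (l div r)) = (\<Sum>j<k. \<Sum>l\<in>{j*r..<j*r+r}. g j)"
    unfolding sum.nat_group[symmetric] using div_eq_on_block[OF assms] by simp
  then show ?thesis by (simp add: sum_distrib_left)
qed

lemma sum_approx_coef_sq_le_compensated:
  fixes \<gamma> h c :: real
  assumes \<gamma>: "\<gamma> > 0" and h: "h > 0" and r: "r > 0"
  shows "(h / real r) * (\<Sum>l<k*r. (approx_coef \<gamma> c 1 h k r l)^2)
     \<le> 2 * c^2 * (\<gamma>^2 * (h / real r)^2 * (real k * h) + \<gamma>^2 * h^2 * ((1 + 2*\<gamma>*h) / (2*\<gamma>)))"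
proof -
  define \<delta> where "\<delta> = h / real r"
  define E where "E j = exp (-\<gamma> * (real k * h - real (Suc j) * h))" for j
  have \<delta>: "\<delta> > 0" and r\<delta>: "real r * \<delta> = h" and T: "real (k * r) * \<delta> = real k * h"
    using h r by (simp_all add: \<delta>_def)
  have "\<delta> * (\<Sum>l<k*r. (approx_coef \<gamma> c 1 h k r l)^2)
      \<le> \<delta> * (\<Sum>l<k*r. 2 * c^2 * (\<gamma>^2 * \<delta>^2 + \<gamma>^2 * h^2 * (E (l div r))^2))"
    using \<delta> approx_coef_compensated_sq_le[OF \<gamma> h r] unfolding \<delta>_def E_def
    by (intro mult_left_mono sum_mono) auto
  also have "\<dots> = 2 * c^2 * (\<gamma>^2 * \<delta>^2 * (real (k * r) * \<delta>) + \<gamma>^2 * h^2 * ((real r * \<delta>) * (\<Sum>j<k. (E j)^2)))"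
    by (simp add: sum.distrib sum_distrib_left[symmetric] sum_div_eq_mult_sum[OF r, of "\<lambda>j. (E j)^2"] algebra_simps)
  also have "\<dots> \<le> 2 * c^2 * (\<gamma>^2 * \<delta>^2 * (real k * h) + \<gamma>^2 * h^2 * ((1 + 2*\<gamma>*h) / (2*\<gamma>)))"
    using sum_exp_decay_sq_le[OF \<gamma> h, of k] unfolding r\<delta> T E_def
    by (intro mult_left_mono add_left_mono) auto
  finally show ?thesis unfolding \<delta>_def .
qed

text \<open>For \<open>h \<le> 1\<close> the compensated statistic (\<open>b = 1\<close>) has standard deviation \<open>O(h)\<close>; for large \<open>h\<close>
  the velocity itself (\<open>b = 0\<close>) is used, whose variance is bounded by \<open>2\<close>.\<close>

definition sd_bound :: "real \<Rightarrow> real \<Rightarrow> real" where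
  "sd_bound \<gamma> h = (if h \<le> 1 then sqrt (2 * \<gamma>^2 * (1 + 2 * \<gamma>) + 1) * h else sqrt 3)"

lemma sd_bound_pos: "\<gamma> > 0 \<Longrightarrow> h > 0 \<Longrightarrow> sd_bound \<gamma> h > 0"
  unfolding sd_bound_def by (simp add: add_pos_nonneg)

lemma eventually_sum_approx_coef_sq_le_compensated:
  fixes \<gamma> h :: real
  assumes \<gamma>: "\<gamma> > 0" and h: "h > 0" "h \<le> 1"
  shows "\<forall>\<^sub>F r in sequentially. (h / real r) * (\<Sum>l<k*r. (approx_coef \<gamma> (sqrt (2*\<gamma>)) 1 h k r l)^2)
           \<le> h^2 * (2 * \<gamma>^2 * (1 + 2 * \<gamma>) + 1)"
proof -
  define Bd where "Bd r = 2 * (2*\<gamma>) * (\<gamma>^2 * (h / real r)^2 * (real k * h) + \<gamma>^2 * h^2 * ((1 + 2*\<gamma>*h) / (2*\<gamma>)))"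
    for r :: nat
  have "Bd \<longlonglongrightarrow> 2 * (2*\<gamma>) * (\<gamma>^2 * 0^2 * (real k * h) + \<gamma>^2 * h^2 * ((1 + 2*\<gamma>*h) / (2*\<gamma>)))"
    unfolding Bd_def by (intro tendsto_intros)
  moreover have "2 * (2*\<gamma>) * (\<gamma>^2 * 0^2 * (real k * h) + \<gamma>^2 * h^2 * ((1 + 2*\<gamma>*h) / (2*\<gamma>)))
      = 2 * \<gamma>^2 * h^2 * (1 + 2*\<gamma>*h)"
    using \<gamma> by (simp add: field_simps power2_eq_square)
  ultimately have lim: "Bd \<longlonglongrightarrow> 2 * \<gamma>^2 * h^2 * (1 + 2*\<gamma>*h)" by simp
  have "2 * \<gamma>^2 * h^2 * (1 + 2*\<gamma>*h) \<le> 2 * \<gamma>^2 * h^2 * (1 + 2*\<gamma>)"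
    using \<gamma> h by (intro mult_left_mono) auto
  also have "\<dots> < h^2 * (2 * \<gamma>^2 * (1 + 2 * \<gamma>) + 1)"
    using h by (simp add: algebra_simps)
  finally have "\<forall>\<^sub>F r in sequentially. Bd r < h^2 * (2 * \<gamma>^2 * (1 + 2 * \<gamma>) + 1)"
    by (rule order_tendstoD(2)[OF lim])
  then show ?thesis
    using eventually_gt_at_top[of 0]
  proof eventually_elim
    case (elim r)
    then show ?case
      using sum_approx_coef_sq_le_compensated[OF \<gamma> h(1), where r=r and k=k and c="sqrt (2*\<gamma>)"] \<gamma>
      unfolding Bd_def by simp
  qed
qed

lemma eventually_sum_approx_coef_sq_le_plain:
  fixes \<gamma> h :: real
  assumes \<gamma>: "\<gamma> > 0" and h: "h > 0"
  shows "\<forall>\<^sub>F r in sequentially. (h / real r) * (\<Sum>l<k*r. (approx_coef \<gamma> (sqrt (2*\<gamma>)) 0 h k r l)^2) \<le> 3"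
proof -
  define Bd where "Bd r = 2 * (2*\<gamma>) * (\<gamma>^2 * (h / real r)^2 * (real k * h) + (1 + 2*\<gamma>*(h / real r)) / (2*\<gamma>))"
    for r :: nat
  have "Bd \<longlonglongrightarrow> 2 * (2*\<gamma>) * (\<gamma>^2 * 0^2 * (real k * h) + (1 + 2*\<gamma>*0) / (2*\<gamma>))"
    unfolding Bd_def by (intro tendsto_intros) (use \<gamma> in auto)
  moreover have "2 * (2*\<gamma>) * (\<gamma>^2 * 0^2 * (real k * h) + (1 + 2*\<gamma>*0) / (2*\<gamma>)) = 2"
    using \<gamma> by simp
  ultimately have "\<forall>\<^sub>F r in sequentially. Bd r < 3"
    by (intro order_tendstoD(2)) auto
  then show ?thesis
    using eventually_gt_at_top[of 0]
  proof eventually_elim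
    case (elim r)
    then show ?case
      using sum_approx_coef_sq_le_plain[OF \<gamma> h, where r=r and k=k and c="sqrt (2*\<gamma>)"] \<gamma>
      unfolding Bd_def by simp
  qed
qed

lemma eventually_sum_approx_coef_sq_le:
  fixes \<gamma> h :: real
  assumes \<gamma>: "\<gamma> > 0" and h: "h > 0"
  shows "\<forall>\<^sub>F r in sequentially. (h / real r) *
           (\<Sum>l<k*r. (approx_coef \<gamma> (sqrt (2*\<gamma>)) (if h \<le> 1 then 1 else 0) h k r l)^2) \<le> (sd_bound \<gamma> h)^2"
proof (cases "h \<le> 1")
  case True
  have "(sd_bound \<gamma> h)^2 = h^2 * (2 * \<gamma>^2 * (1 + 2 * \<gamma>) + 1)"
    using True \<gamma> by (simp add: sd_bound_def power_mult_distrib add_pos_nonneg)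
  then show ?thesis using eventually_sum_approx_coef_sq_le_compensated[OF \<gamma> h True] True by simp
next
  case False
  then show ?thesis using eventually_sum_approx_coef_sq_le_plain[OF \<gamma> h] by (simp add: sd_bound_def)
qed

section \<open>The kinetic Langevin process\<close>

lemma borel_measurable_fst' [measurable (raw)]:
  fixes g :: "'a \<Rightarrow> ('b::topological_space) \<times> ('c::topological_space)"
  shows "g \<in> borel_measurable M \<Longrightarrow> (\<lambda>x. fst (g x)) \<in> borel_measurable M"
  by (rule borel_measurable_continuous_on[OF continuous_on_fst[OF continuous_on_id]])

lemma borel_measurable_snd' [measurable (raw)]:
  fixes g :: "'a \<Rightarrow> ('b::topological_space) \<times> ('c::topological_space)"
  shows "g \<in> borel_measurable M \<Longrightarrow> (\<lambda>x. snd (g x)) \<in> borel_measurable M"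
  by (rule borel_measurable_continuous_on[OF continuous_on_snd[OF continuous_on_id]])

lemma borel_measurable_vec_nth [measurable (raw)]:
  fixes g :: "'a \<Rightarrow> real ^ 'd"
  shows "g \<in> borel_measurable M \<Longrightarrow> (\<lambda>x. g x $ i) \<in> borel_measurable M"
  by (rule borel_measurable_continuous_on[where f="\<lambda>x. x $ i"]) (auto intro: continuous_intros)

definition kinetic_Q :: "real \<Rightarrow> (real ^ 'd) \<times> (real ^ 'd) \<Rightarrow> real ^ 'd" where
  "kinetic_Q \<gamma> p = fst p + (1 / \<gamma>) *\<^sub>R snd p"

text \<open>For \<open>b = 1\<close> the sum is a discretisation of the noise part
  \<open>sqrt (2 \<gamma>) \<integral>\<^sub>0\<^sup>k\<^sup>h exp (-\<gamma> (k h - s)) dW\<^sub>s\<close> of the velocity at time \<open>k h\<close>, written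
  with the increments of \<open>Q = Q\<^sub>0 + (sqrt (2 \<gamma>) / \<gamma>) W\<close>.\<close>

definition velocity_statistic ::
  "real \<Rightarrow> real \<Rightarrow> real \<Rightarrow> nat \<Rightarrow> 'd \<Rightarrow> (nat \<Rightarrow> (real ^ 'd) \<times> (real ^ 'd)) \<Rightarrow> real" where
  "velocity_statistic \<gamma> b h k i \<zeta> = snd (\<zeta> k) $ i - \<gamma> * b *
     (\<Sum>j<k. exp (-\<gamma> * (real k * h - real (Suc j) * h)) * (kinetic_Q \<gamma> (\<zeta> (Suc j)) $ i - kinetic_Q \<gamma> (\<zeta> j) $ i))"

lemma measurable_velocity_statistic [measurable]:
  "velocity_statistic \<gamma> b h k i \<in> borel_measurable (Pi\<^sub>M UNIV (\<lambda>_. borel))"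
  unfolding velocity_statistic_def kinetic_Q_def by measurable

lemma measurable_sampled_path:
  fixes Z :: "real \<Rightarrow> 'a \<Rightarrow> (real ^ 'd) \<times> (real ^ 'd)"
  assumes "solves_kinetic \<gamma> P W z Z" "h > 0"
  shows "(\<lambda>\<omega> j. Z (h * real j) \<omega>) \<in> measurable P (Pi\<^sub>M UNIV (\<lambda>_. borel))"
proof (rule measurable_PiM_single')
  show "(\<lambda>\<omega>. Z (h * real j) \<omega>) \<in> borel_measurable P" for j
    using assms unfolding solves_kinetic_def by simp
qed auto

lemma velocity_statistic_cong:
  assumes "\<And>j. kinetic_Q \<gamma> (\<zeta> j) = kinetic_Q \<gamma> (\<xi> j)" "\<zeta> k = \<xi> k"
  shows "velocity_statistic \<gamma> b h k i \<zeta> = velocity_statistic \<gamma> b h k i \<xi>"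
  unfolding velocity_statistic_def using assms by simp

lemma kinetic_Q_path:
  fixes \<zeta> :: "real \<Rightarrow> (real ^ 'd) \<times> (real ^ 'd)"
  assumes "\<gamma> > 0" "t \<ge> 0"
    and "fst (\<zeta> t) = fst z + integral {0..t} (\<lambda>s. snd (\<zeta> s))"
    and "snd (\<zeta> t) = snd z - \<gamma> *\<^sub>R integral {0..t} (\<lambda>s. snd (\<zeta> s)) + sqrt (2 * \<gamma>) *\<^sub>R w t"
  shows "kinetic_Q \<gamma> (\<zeta> t) = kinetic_Q \<gamma> z + (sqrt (2 * \<gamma>) / \<gamma>) *\<^sub>R w t"
proof -
  have "(1 / \<gamma>) *\<^sub>R snd (\<zeta> t)
      = (1 / \<gamma>) *\<^sub>R snd z - integral {0..t} (\<lambda>s. snd (\<zeta> s)) + (sqrt (2 * \<gamma>) / \<gamma>) *\<^sub>R w t"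
    using assms(1,4) by (simp add: scaleR_diff_right scaleR_add_right)
  then show ?thesis using assms(3) unfolding kinetic_Q_def by simp
qed

lemma kinetic_velocity_path:
  fixes \<zeta> :: "real \<Rightarrow> (real ^ 'd) \<times> (real ^ 'd)" and w :: "real \<Rightarrow> real ^ 'd"
  assumes \<gamma>: "\<gamma> > 0" and T: "T \<ge> 0" and cont: "continuous_on {0..T} \<zeta>"
    and eq: "\<And>t. 0 \<le> t \<Longrightarrow> t \<le> T \<Longrightarrow>
       snd (\<zeta> t) = snd z - \<gamma> *\<^sub>R integral {0..t} (\<lambda>s. snd (\<zeta> s)) + sqrt (2 * \<gamma>) *\<^sub>R w t"
  shows "continuous_on {0..T} (\<lambda>t. w t $ i)"
    and "snd (\<zeta> T) $ i = exp (-\<gamma> * T) * (snd z $ i) +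
           sqrt (2 * \<gamma>) * (w T $ i - \<gamma> * exp (-\<gamma> * T) * integral {0..T} (\<lambda>s. exp (\<gamma> * s) * w s $ i))"
proof -
  define c where "c = sqrt (2 * \<gamma>)"
  have c: "c > 0" using \<gamma> by (simp add: c_def)
  define V where "V t = snd (\<zeta> t) $ i" for t
  have cont_snd: "continuous_on {0..t} (\<lambda>s. snd (\<zeta> s))" if "t \<le> T" for t
    using that by (intro continuous_on_subset[OF continuous_on_snd[OF cont]]) auto
  have cV: "continuous_on {0..t} V" if "t \<le> T" for t
    unfolding V_def by (intro continuous_intros cont_snd that)
  have eqV: "V t = snd z $ i - \<gamma> * integral {0..t} V + c * w t $ i" if "0 \<le> t" "t \<le> T" for t
  proof -
    have int: "integral {0..t} V = integral {0..t} (\<lambda>s. snd (\<zeta> s)) $ i"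
      unfolding V_def using integrable_continuous_interval[OF cont_snd[OF that(2)]] by simp
    have "V t = snd z $ i - \<gamma> * (integral {0..t} (\<lambda>s. snd (\<zeta> s)) $ i) + c * w t $ i"
      using eq[OF that] unfolding V_def c_def by simp
    then show ?thesis by (simp only: int)
  qed
  have "continuous_on {0..T} (\<lambda>t. integral {0..t} V)"
    by (rule indefinite_integral_continuous_1[OF integrable_continuous_interval[OF cV[OF order_refl]]])
  then have "continuous_on {0..T} (\<lambda>t. (V t - snd z $ i + \<gamma> * integral {0..t} V) / c)"
    using c by (intro continuous_intros cV[OF order_refl]) auto
  moreover have "(V t - snd z $ i + \<gamma> * integral {0..t} V) / c = w t $ i" if "t \<in> {0..T}" for t
    using eqV[of t] that c by (simp add: field_simps)
  ultimately show cw: "continuous_on {0..T} (\<lambda>t. w t $ i)"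
    by (rule continuous_on_eq)
  show "snd (\<zeta> T) $ i = exp (-\<gamma> * T) * (snd z $ i) +
           sqrt (2 * \<gamma>) * (w T $ i - \<gamma> * exp (-\<gamma> * T) * integral {0..T} (\<lambda>s. exp (\<gamma> * s) * w s $ i))"
    using integral_equation_solution[OF \<gamma> T cV[OF order_refl] cw eqV] unfolding V_def c_def .
qed

lemma velocity_statistic_path_limit:
  fixes \<zeta> :: "real \<Rightarrow> (real ^ 'd) \<times> (real ^ 'd)" and w :: "real \<Rightarrow> real ^ 'd"
  assumes \<gamma>: "\<gamma> > 0" and h: "h > 0" and k: "k > 0"
    and cont: "continuous_on {0..} \<zeta>" and w0: "w 0 $ i = 0"
    and eqs: "\<forall>t\<ge>0. fst (\<zeta> t) = fst z + integral {0..t} (\<lambda>s. snd (\<zeta> s)) \<and>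
                   snd (\<zeta> t) = snd z - \<gamma> *\<^sub>R integral {0..t} (\<lambda>s. snd (\<zeta> s)) + sqrt (2 * \<gamma>) *\<^sub>R w t"
  shows "(\<lambda>r. \<Sum>l<k*r. approx_coef \<gamma> (sqrt (2 * \<gamma>)) b h k r l * increment (\<lambda>t. w t $ i) (h / real r) l)
     \<longlonglongrightarrow> velocity_statistic \<gamma> b h k i (\<lambda>j. \<zeta> (h * real j)) - exp (-\<gamma> * (real k * h)) * snd z $ i"
proof -
  define c where "c = sqrt (2 * \<gamma>)"
  define T where "T = real k * h"
  define E where "E j = exp (-\<gamma> * (T - real (Suc j) * h))" for j
  have T: "T \<ge> 0" using h by (simp add: T_def)
  have path: "continuous_on {0..T} \<zeta>" using cont by (rule continuous_on_subset) auto
  have eq_snd: "snd (\<zeta> t) = snd z - \<gamma> *\<^sub>R integral {0..t} (\<lambda>s. snd (\<zeta> s)) + sqrt (2 * \<gamma>) *\<^sub>R w t"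
    if "0 \<le> t" "t \<le> T" for t
    using eqs that by blast
  note velocity = kinetic_velocity_path[OF \<gamma> T path eq_snd, where i=i]
  have Q_incr: "\<gamma> * (kinetic_Q \<gamma> (\<zeta> (h * real (Suc j))) $ i - kinetic_Q \<gamma> (\<zeta> (h * real j)) $ i)
      = c * (w (real (Suc j) * h) $ i - w (real j * h) $ i)" for j
  proof -
    have "kinetic_Q \<gamma> (\<zeta> t) = kinetic_Q \<gamma> z + (c / \<gamma>) *\<^sub>R w t" if "t \<ge> 0" for t
      using kinetic_Q_path[OF \<gamma> that] eqs that unfolding c_def by blast
    then show ?thesis using h \<gamma> by (simp add: algebra_simps)
  qed
  have "velocity_statistic \<gamma> b h k i (\<lambda>j. \<zeta> (h * real j))
      = snd (\<zeta> T) $ i - b * (\<Sum>j<k. E j * (c * (w (real (Suc j) * h) $ i - w (real j * h) $ i)))"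
    unfolding velocity_statistic_def E_def T_def Q_incr[symmetric]
    by (simp add: sum_distrib_left algebra_simps)
  also have "\<dots> = exp (-\<gamma> * T) * snd z $ i + c * (w T $ i - \<gamma> * exp (-\<gamma> * T) * integral {0..T} (\<lambda>s. exp (\<gamma> * s) * w s $ i)
       - b * (\<Sum>j<k. E j * (w (real (Suc j) * h) $ i - w (real j * h) $ i)))"
    using velocity(2) unfolding c_def by (simp add: sum_distrib_left algebra_simps)
  finally have "c * (w T $ i - \<gamma> * exp (-\<gamma> * T) * integral {0..T} (\<lambda>s. exp (\<gamma> * s) * w s $ i)
       - b * (\<Sum>j<k. E j * (w (real (Suc j) * h) $ i - w (real j * h) $ i)))
      = velocity_statistic \<gamma> b h k i (\<lambda>j. \<zeta> (h * real j)) - exp (-\<gamma> * T) * snd z $ i"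
    by simp
  then show ?thesis
    using tendsto_approx_coef_sum[of "\<lambda>t. w t $ i" k h \<gamma> c b, OF w0 _ k h] velocity(1)
    unfolding c_def T_def E_def by simp
qed

lemma solves_kinetic_AE_initial:
  assumes BM: "is_BM P W" and sol: "solves_kinetic \<gamma> P W z Z"
  shows "AE \<omega> in P. Z 0 \<omega> = z"
proof -
  have "AE \<omega> in P. \<forall>i\<in>UNIV. W 0 \<omega> $ i = 0"
    by (rule AE_finite_allI) (use is_BM1_AE_zero[OF is_BM_coordinate[OF BM]] in auto)
  moreover have "AE \<omega> in P. \<forall>t\<ge>0. fst (Z t \<omega>) = fst z + integral {0..t} (\<lambda>s. snd (Z s \<omega>)) \<and>
                snd (Z t \<omega>) = snd z - \<gamma> *\<^sub>R integral {0..t} (\<lambda>s. snd (Z s \<omega>)) + sqrt (2 * \<gamma>) *\<^sub>R W t \<omega>"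
    using sol unfolding solves_kinetic_def by (auto elim: AE_mp)
  ultimately show ?thesis
    by eventually_elim (auto simp: prod_eq_iff vec_eq_iff)
qed

lemma velocity_statistic_approximation:
  fixes W :: "real \<Rightarrow> 'a \<Rightarrow> real ^ 'd" and Z :: "real \<Rightarrow> 'a \<Rightarrow> (real ^ 'd) \<times> (real ^ 'd)"
  assumes \<gamma>: "\<gamma> > 0" and BM: "is_BM P W" and sol: "solves_kinetic \<gamma> P W z Z" and h: "h > 0" and k: "k > 0"
  shows "AE \<omega> in P. (\<lambda>r. \<Sum>l<k*r. approx_coef \<gamma> (sqrt (2*\<gamma>)) b h k r l * increment (\<lambda>t. W t \<omega> $ i) (h / real r) l)
     \<longlonglongrightarrow> velocity_statistic \<gamma> b h k i (\<lambda>j. Z (h * real j) \<omega>) - exp (-\<gamma> * (real k * h)) * snd z $ i"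
proof -
  have "AE \<omega> in P. W 0 \<omega> $ i = 0"
    using is_BM1_AE_zero[OF is_BM_coordinate[OF BM]] by simp
  moreover have "AE \<omega> in P. continuous_on {0..} (\<lambda>t. Z t \<omega>) \<and>
        (\<forall>t\<ge>0. fst (Z t \<omega>) = fst z + integral {0..t} (\<lambda>s. snd (Z s \<omega>)) \<and>
                snd (Z t \<omega>) = snd z - \<gamma> *\<^sub>R integral {0..t} (\<lambda>s. snd (Z s \<omega>)) + sqrt (2 * \<gamma>) *\<^sub>R W t \<omega>)"
    using sol unfolding solves_kinetic_def by blast
  ultimately show ?thesis
    by eventually_elim (intro velocity_statistic_path_limit[OF \<gamma> h k]; blast)
qed

lemma velocity_statistic_softsign_gap:
  fixes k :: nat
  assumes \<gamma>: "\<gamma> > 0" and BM: "is_BM P W" and BMt: "is_BM Pt Wt"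
    and sol: "solves_kinetic \<gamma> P W z Z" and solt: "solves_kinetic \<gamma> Pt Wt zt Zt"
    and h: "h > 0" and k: "k \<noteq> 0" and v: "snd z $ i \<noteq> snd zt $ i"
  defines "b \<equiv> (if h \<le> 1 then 1 else 0 :: real)"
    and "x \<equiv> exp (-\<gamma> * (real k * h)) * \<bar>snd z $ i - snd zt $ i\<bar>"
    and "mid \<equiv> exp (-\<gamma> * (real k * h)) * (snd z $ i + snd zt $ i) / 2"
  shows "(10/81) * (x / (sd_bound \<gamma> h + x)) \<le>
    \<bar>(\<integral>\<omega>. softsign ((velocity_statistic \<gamma> b h k i (\<lambda>j. Z (h * real j) \<omega>) - mid) / (sd_bound \<gamma> h + x)) \<partial>P)
     - (\<integral>\<omega>. softsign ((velocity_statistic \<gamma> b h k i (\<lambda>j. Zt (h * real j) \<omega>) - mid) / (sd_bound \<gamma> h + x)) \<partial>Pt)\<bar>"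
proof -
  define \<sigma> where "\<sigma> = sd_bound \<gamma> h"
  define m where "m = exp (-\<gamma> * (real k * h)) * snd z $ i"
  define mt where "mt = exp (-\<gamma> * (real k * h)) * snd zt $ i"
  define S where "S \<omega> = velocity_statistic \<gamma> b h k i (\<lambda>j. Z (h * real j) \<omega>)" for \<omega>
  define St where "St \<omega> = velocity_statistic \<gamma> b h k i (\<lambda>j. Zt (h * real j) \<omega>)" for \<omega>
  have "(10/81) * (\<bar>m - mt\<bar> / (\<sigma> + \<bar>m - mt\<bar>)) \<le>
      \<bar>(\<integral>\<omega>. softsign ((S \<omega> - (m + mt)/2) / (\<sigma> + \<bar>m - mt\<bar>)) \<partial>P)
       - (\<integral>\<omega>. softsign ((St \<omega> - (m + mt)/2) / (\<sigma> + \<bar>m - mt\<bar>)) \<partial>Pt)\<bar>"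
  proof (rule softsign_gap_of_increment_approximations[OF is_BM_coordinate[OF BM] is_BM_coordinate[OF BMt],
        where \<delta>="\<lambda>r. h / real r" and n="\<lambda>r. k * r" and a="\<lambda>r l. approx_coef \<gamma> (sqrt (2 * \<gamma>)) b h k r l"])
    show "h / real r \<ge> 0" for r using h by simp
    show "\<forall>\<^sub>F r in sequentially. h / real r > 0"
      using eventually_gt_at_top[of 0] by eventually_elim (use h in simp)
    show "S \<in> borel_measurable P" "St \<in> borel_measurable Pt"
      unfolding S_def St_def
      using measurable_comp[OF measurable_sampled_path[OF sol h] measurable_velocity_statistic]
        measurable_comp[OF measurable_sampled_path[OF solt h] measurable_velocity_statistic]
      by (simp_all add: comp_def)
    show "AE \<omega> in P. (\<lambda>r. \<Sum>l<k * r. approx_coef \<gamma> (sqrt (2 * \<gamma>)) b h k r l * increment (\<lambda>t. W t \<omega> $ i) (h / real r) l)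
        \<longlonglongrightarrow> S \<omega> - m"
      unfolding S_def m_def using velocity_statistic_approximation[OF \<gamma> BM sol h] k by simp
    show "AE \<omega> in Pt. (\<lambda>r. \<Sum>l<k * r. approx_coef \<gamma> (sqrt (2 * \<gamma>)) b h k r l * increment (\<lambda>t. Wt t \<omega> $ i) (h / real r) l)
        \<longlonglongrightarrow> St \<omega> - mt"
      unfolding St_def mt_def using velocity_statistic_approximation[OF \<gamma> BMt solt h] k by simp
    show "\<forall>\<^sub>F r in sequentially. h / real r * (\<Sum>l<k * r. (approx_coef \<gamma> (sqrt (2 * \<gamma>)) b h k r l)^2) \<le> \<sigma>^2"
      unfolding b_def \<sigma>_def by (rule eventually_sum_approx_coef_sq_le[OF \<gamma> h])
    show "\<sigma> > 0" using sd_bound_pos[OF \<gamma> h] by (simp add: \<sigma>_def)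
    show "m \<noteq> mt" using v by (simp add: m_def mt_def)
  qed
  moreover have "\<bar>m - mt\<bar> = x"
    unfolding m_def mt_def x_def by (simp add: right_diff_distrib[symmetric] abs_mult)
  moreover have "(m + mt) / 2 = mid" unfolding m_def mt_def mid_def by (simp add: algebra_simps)
  ultimately show ?thesis unfolding S_def St_def \<sigma>_def by simp
qed

section \<open>Couplings synchronising \<open>Q\<close>\<close>

lemma integral_comp_eq_of_distr_eq:
  fixes f :: "'c \<Rightarrow> real"
  assumes "F \<in> measurable M N" "G \<in> measurable P N" "distr M N F = distr P N G" "f \<in> borel_measurable N"
  shows "(\<integral>\<omega>. f (F \<omega>) \<partial>M) = (\<integral>\<omega>. f (G \<omega>) \<partial>P)"
  using integral_distr[OF assms(1,4)] integral_distr[OF assms(2,4)] assms(3) by simp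

lemma AE_comp_of_distr_eq:
  assumes "F \<in> measurable M N" "G \<in> measurable P N" "distr M N F = distr P N G"
    and "{x \<in> space N. Q x} \<in> sets N" "AE \<omega> in P. Q (G \<omega>)"
  shows "AE \<omega> in M. Q (F \<omega>)"
proof -
  have "AE x in distr P N G. Q x" using AE_distr_iff[OF assms(2,4)] assms(5) by simp
  then have "AE x in distr M N F. Q x" unfolding assms(3) .
  then show ?thesis using AE_distr_iff[OF assms(1,4)] by simp
qed

lemma measurable_coupling_marginals:
  fixes \<mu> :: "(nat \<Rightarrow> ((real ^ 'd) \<times> (real ^ 'd)) \<times> ((real ^ 'd) \<times> (real ^ 'd))) measure"
  assumes "sets \<mu> = sets (Pi\<^sub>M UNIV (\<lambda>_. borel))"
  shows "(\<lambda>\<omega> j. fst (\<omega> j)) \<in> measurable \<mu> (Pi\<^sub>M UNIV (\<lambda>_. borel))"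
    and "(\<lambda>\<omega> j. snd (\<omega> j)) \<in> measurable \<mu> (Pi\<^sub>M UNIV (\<lambda>_. borel))"
  unfolding measurable_cong_sets[OF assms refl]
  by (auto intro!: measurable_PiM_single' borel_measurable_fst' borel_measurable_snd' measurable_component_singleton)

definition Q_coupling ::
  "real \<Rightarrow> 'a measure \<Rightarrow> (real \<Rightarrow> 'a \<Rightarrow> (real ^ 'd) \<times> (real ^ 'd)) \<Rightarrow>
   'b measure \<Rightarrow> (real \<Rightarrow> 'b \<Rightarrow> (real ^ 'd) \<times> (real ^ 'd)) \<Rightarrow> real \<Rightarrow>
   (nat \<Rightarrow> ((real ^ 'd) \<times> (real ^ 'd)) \<times> ((real ^ 'd) \<times> (real ^ 'd))) measure \<Rightarrow> bool" where
  "Q_coupling \<gamma> P Z Pt Zt h \<mu> \<longleftrightarrow>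
     prob_space \<mu> \<and>
     sets \<mu> = sets (Pi\<^sub>M UNIV (\<lambda>_. borel)) \<and>
     distr \<mu> (Pi\<^sub>M UNIV (\<lambda>_. borel)) (\<lambda>\<omega> k. fst (\<omega> k))
       = distr P (Pi\<^sub>M UNIV (\<lambda>_. borel)) (\<lambda>\<omega> k. Z (h * real k) \<omega>) \<and>
     distr \<mu> (Pi\<^sub>M UNIV (\<lambda>_. borel)) (\<lambda>\<omega> k. snd (\<omega> k))
       = distr Pt (Pi\<^sub>M UNIV (\<lambda>_. borel)) (\<lambda>\<omega> k. Zt (h * real k) \<omega>) \<and>
     measure \<mu> {\<omega> \<in> space \<mu>. \<forall>k. fst (fst (\<omega> k)) + (1 / \<gamma>) *\<^sub>R snd (fst (\<omega> k))
                                = fst (snd (\<omega> k)) + (1 / \<gamma>) *\<^sub>R snd (snd (\<omega> k))} = 1"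

context
  fixes \<gamma> h :: real and P :: "'a measure" and W :: "real \<Rightarrow> 'a \<Rightarrow> real ^ 'd"
    and Pt :: "'b measure" and Wt :: "real \<Rightarrow> 'b \<Rightarrow> real ^ 'd"
    and z zt :: "(real ^ 'd) \<times> (real ^ 'd)"
    and Z :: "real \<Rightarrow> 'a \<Rightarrow> (real ^ 'd) \<times> (real ^ 'd)"
    and Zt :: "real \<Rightarrow> 'b \<Rightarrow> (real ^ 'd) \<times> (real ^ 'd)"
    and \<mu> :: "(nat \<Rightarrow> ((real ^ 'd) \<times> (real ^ 'd)) \<times> ((real ^ 'd) \<times> (real ^ 'd))) measure"
  assumes sol: "solves_kinetic \<gamma> P W z Z" and solt: "solves_kinetic \<gamma> Pt Wt zt Zt" and h: "h > 0"
    and coupling: "Q_coupling \<gamma> P Z Pt Zt h \<mu>"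
begin

interpretation \<mu>: prob_space \<mu>
  using coupling unfolding Q_coupling_def by blast

lemma Q_coupling_sets: "sets \<mu> = sets (Pi\<^sub>M UNIV (\<lambda>_. borel))"
  using coupling unfolding Q_coupling_def by blast

lemma Q_coupling_marginals:
  "distr \<mu> (Pi\<^sub>M UNIV (\<lambda>_. borel)) (\<lambda>\<omega> k. fst (\<omega> k)) = distr P (Pi\<^sub>M UNIV (\<lambda>_. borel)) (\<lambda>\<omega> k. Z (h * real k) \<omega>)"
  "distr \<mu> (Pi\<^sub>M UNIV (\<lambda>_. borel)) (\<lambda>\<omega> k. snd (\<omega> k)) = distr Pt (Pi\<^sub>M UNIV (\<lambda>_. borel)) (\<lambda>\<omega> k. Zt (h * real k) \<omega>)"
  using coupling unfolding Q_coupling_def by blast+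

lemma Q_coupling_synchronised: "AE \<omega> in \<mu>. \<forall>j. kinetic_Q \<gamma> (fst (\<omega> j)) = kinetic_Q \<gamma> (snd (\<omega> j))"
proof -
  have "AE \<omega> in \<mu>. \<omega> \<in> {\<omega> \<in> space \<mu>. \<forall>k. fst (fst (\<omega> k)) + (1 / \<gamma>) *\<^sub>R snd (fst (\<omega> k))
                                = fst (snd (\<omega> k)) + (1 / \<gamma>) *\<^sub>R snd (snd (\<omega> k))}"
    by (rule \<mu>.AE_prob_1) (use coupling in \<open>simp add: Q_coupling_def\<close>)
  then show ?thesis by eventually_elim (simp add: kinetic_Q_def)
qed

lemma sets_Q_coupling_mismatch: "{\<omega> \<in> space \<mu>. fst (\<omega> k) \<noteq> snd (\<omega> k)} \<in> sets \<mu>"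
proof -
  have "Measurable.pred (Pi\<^sub>M UNIV (\<lambda>_. borel))
      (\<lambda>\<omega>::nat \<Rightarrow> ((real ^ 'd) \<times> (real ^ 'd)) \<times> ((real ^ 'd) \<times> (real ^ 'd)). fst (\<omega> k) \<noteq> snd (\<omega> k))"
    by measurable
  then have "Measurable.pred \<mu> (\<lambda>\<omega>. fst (\<omega> k) \<noteq> snd (\<omega> k))"
    by (subst measurable_cong_sets[OF Q_coupling_sets refl])
  then show ?thesis by (simp add: pred_def)
qed

lemma Q_coupling_AE_initial: "AE \<omega> in \<mu>. fst (\<omega> 0) = z \<and> snd (\<omega> 0) = zt"
  if BM: "is_BM P W" and BMt: "is_BM Pt Wt"
proof -
  have init: "{x \<in> space (Pi\<^sub>M UNIV (\<lambda>_. borel)). x 0 = y} \<in> sets (Pi\<^sub>M UNIV (\<lambda>_. borel))" for y :: "(real ^ 'd) \<times> (real ^ 'd)"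
    by measurable
  have "AE \<omega> in \<mu>. fst (\<omega> 0) = z"
    using AE_comp_of_distr_eq[OF measurable_coupling_marginals(1)[OF Q_coupling_sets]
        measurable_sampled_path[OF sol h] Q_coupling_marginals(1) init[of z]]
      solves_kinetic_AE_initial[OF BM sol] by simp
  moreover have "AE \<omega> in \<mu>. snd (\<omega> 0) = zt"
    using AE_comp_of_distr_eq[OF measurable_coupling_marginals(2)[OF Q_coupling_sets]
        measurable_sampled_path[OF solt h] Q_coupling_marginals(2) init[of zt]]
      solves_kinetic_AE_initial[OF BMt solt] by simp
  ultimately show ?thesis by eventually_elim simp
qed

lemma Q_coupling_initial_Q_eq:
  assumes "is_BM P W" "is_BM Pt Wt"
  shows "kinetic_Q \<gamma> z = kinetic_Q \<gamma> zt"
proof -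
  have "AE \<omega> in \<mu>. kinetic_Q \<gamma> z = kinetic_Q \<gamma> zt"
    using Q_coupling_AE_initial[OF assms] Q_coupling_synchronised by eventually_elim auto
  then show ?thesis by simp
qed

lemma Q_coupling_initial_mismatch:
  assumes "is_BM P W" "is_BM Pt Wt" "z \<noteq> zt"
  shows "measure \<mu> {\<omega> \<in> space \<mu>. fst (\<omega> 0) \<noteq> snd (\<omega> 0)} = 1"
  using \<mu>.prob_Collect_eq_1[OF sets_Q_coupling_mismatch] Q_coupling_AE_initial[OF assms(1,2)] assms(3)
  by (auto elim: eventually_mono)

lemma Q_coupling_statistic_bound:
  assumes "g \<in> borel_measurable borel" "\<And>x. \<bar>g x\<bar> \<le> 1"
  shows "\<bar>(\<integral>\<omega>. g (velocity_statistic \<gamma> b h k i (\<lambda>j. Z (h * real j) \<omega>)) \<partial>P)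
           - (\<integral>\<omega>. g (velocity_statistic \<gamma> b h k i (\<lambda>j. Zt (h * real j) \<omega>)) \<partial>Pt)\<bar>
         \<le> 2 * measure \<mu> {\<omega> \<in> space \<mu>. fst (\<omega> k) \<noteq> snd (\<omega> k)}"
proof -
  define F where "F \<omega> = velocity_statistic \<gamma> b h k i (\<lambda>j. fst (\<omega> j))" for \<omega> :: "nat \<Rightarrow> ((real ^ 'd) \<times> (real ^ 'd)) \<times> ((real ^ 'd) \<times> (real ^ 'd))"
  define Ft where "Ft \<omega> = velocity_statistic \<gamma> b h k i (\<lambda>j. snd (\<omega> j))" for \<omega> :: "nat \<Rightarrow> ((real ^ 'd) \<times> (real ^ 'd)) \<times> ((real ^ 'd) \<times> (real ^ 'd))"
  note marginal = measurable_coupling_marginals[OF Q_coupling_sets]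
  have [measurable]: "g \<in> borel_measurable borel" by fact
  have eq: "(\<integral>\<omega>. g (F \<omega>) \<partial>\<mu>) = (\<integral>\<omega>. g (velocity_statistic \<gamma> b h k i (\<lambda>j. Z (h * real j) \<omega>)) \<partial>P)"
    unfolding F_def
    by (rule integral_comp_eq_of_distr_eq[OF marginal(1) measurable_sampled_path[OF sol h] Q_coupling_marginals(1)])
      measurable
  have eqt: "(\<integral>\<omega>. g (Ft \<omega>) \<partial>\<mu>) = (\<integral>\<omega>. g (velocity_statistic \<gamma> b h k i (\<lambda>j. Zt (h * real j) \<omega>)) \<partial>Pt)"
    unfolding Ft_def
    by (rule integral_comp_eq_of_distr_eq[OF marginal(2) measurable_sampled_path[OF solt h] Q_coupling_marginals(2)])
      measurable
  have meas: "F \<in> borel_measurable \<mu>" "Ft \<in> borel_measurable \<mu>"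
    unfolding F_def Ft_def using marginal by measurable
  have "AE \<omega> in \<mu>. F \<omega> \<noteq> Ft \<omega> \<longrightarrow> \<omega> \<in> {\<omega> \<in> space \<mu>. fst (\<omega> k) \<noteq> snd (\<omega> k)}"
    using Q_coupling_synchronised AE_space
    by eventually_elim (auto simp: F_def Ft_def intro: velocity_statistic_cong)
  from coupling_inequality[OF \<mu>.prob_space_axioms meas assms sets_Q_coupling_mismatch this]
  show ?thesis unfolding eq eqt .
qed

lemma Q_coupling_mismatch_ge:
  fixes k :: nat
  assumes \<gamma>: "\<gamma> > 0" and BM: "is_BM P W" and BMt: "is_BM Pt Wt" and v: "snd z $ i \<noteq> snd zt $ i"
  defines "x \<equiv> exp (-\<gamma> * (real k * h)) * \<bar>snd z $ i - snd zt $ i\<bar>"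
  shows "(5/81) * (x / (sd_bound \<gamma> h + x)) \<le> measure \<mu> {\<omega> \<in> space \<mu>. fst (\<omega> k) \<noteq> snd (\<omega> k)}"
proof (cases "k = 0")
  case True
  have "z \<noteq> zt" using v by auto
  then have "measure \<mu> {\<omega> \<in> space \<mu>. fst (\<omega> k) \<noteq> snd (\<omega> k)} = 1"
    using Q_coupling_initial_mismatch[OF BM BMt] True by simp
  moreover have "x > 0" using v by (simp add: x_def)
  then have "x / (sd_bound \<gamma> h + x) \<le> 1"
    using sd_bound_pos[OF \<gamma> h] by simp
  ultimately show ?thesis by linarith
next
  case False
  define b :: real where "b = (if h \<le> 1 then 1 else 0)"
  define mid where "mid = exp (-\<gamma> * (real k * h)) * (snd z $ i + snd zt $ i) / 2"
  define g where "g y = softsign ((y - mid) / (sd_bound \<gamma> h + x))" for y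
  have g_meas: "g \<in> borel_measurable borel" unfolding g_def by measurable
  have g_bound: "\<bar>g y\<bar> \<le> 1" for y by (simp add: g_def abs_softsign_le_1)
  have "(10/81) * (x / (sd_bound \<gamma> h + x))
      \<le> \<bar>(\<integral>\<omega>. g (velocity_statistic \<gamma> b h k i (\<lambda>j. Z (h * real j) \<omega>)) \<partial>P)
         - (\<integral>\<omega>. g (velocity_statistic \<gamma> b h k i (\<lambda>j. Zt (h * real j) \<omega>)) \<partial>Pt)\<bar>"
    using velocity_statistic_softsign_gap[OF \<gamma> BM BMt sol solt h False v]
    unfolding g_def x_def mid_def b_def .
  also have "\<dots> \<le> 2 * measure \<mu> {\<omega> \<in> space \<mu>. fst (\<omega> k) \<noteq> snd (\<omega> k)}"
    by (rule Q_coupling_statistic_bound[OF g_meas g_bound])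
  finally show ?thesis by simp
qed

end

lemma min_one_mult_le:
  fixes a b :: real
  assumes a: "0 \<le> a" and b: "0 \<le> b"
  shows "min 1 a * min 1 b \<le> min 1 (a * b)"
proof (cases "a \<le> 1"; cases "b \<le> 1")
  assume "a \<le> 1" "b \<le> 1"
  then show ?thesis using a b by (simp add: mult_le_one)
next
  assume "a \<le> 1" "\<not> b \<le> 1"
  then show ?thesis using mult_left_mono[of 1 b a] a by simp
next
  assume "\<not> a \<le> 1" "b \<le> 1"
  then show ?thesis using mult_right_mono[of 1 a b] b by simp
next
  assume "\<not> a \<le> 1" "\<not> b \<le> 1"
  then show ?thesis using mult_mono[of 1 a 1 b] by simp
qed

lemma half_min_one_le_ratio:
  fixes \<sigma> x :: real
  assumes "\<sigma> > 0" "x > 0"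
  shows "min 1 (x / \<sigma>) / 2 \<le> x / (\<sigma> + x)"
proof (cases "x \<le> \<sigma>")
  case True
  have "min 1 (x / \<sigma>) / 2 \<le> x / (2 * \<sigma>)" by simp
  also have "\<dots> \<le> x / (\<sigma> + x)" using True assms by (intro divide_left_mono) auto
  finally show ?thesis .
next
  case False
  then have "x / (2 * x) \<le> x / (\<sigma> + x)" using assms by (intro divide_left_mono) auto
  then show ?thesis using assms by simp
qed

lemma sd_bound_ratio_ge:
  fixes \<gamma> h \<Delta> E :: real
  assumes \<gamma>: "\<gamma> > 0" and h: "h > 0" and \<Delta>: "\<Delta> > 0" and E: "E > 0"
  defines "K \<equiv> sqrt (2 * \<gamma>^2 * (1 + 2 * \<gamma>) + 1)"
  shows "min 1 (min (\<Delta> / K) (\<Delta> / sqrt 3)) * min 1 (E / h) \<le> 2 * (E * \<Delta> / (sd_bound \<gamma> h + E * \<Delta>))"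
proof -
  define a where "a = (if h \<le> 1 then \<Delta> / K else \<Delta> / sqrt 3)"
  have K: "K > 0" using \<gamma> by (simp add: K_def add_pos_nonneg)
  have a: "a \<ge> 0" using \<Delta> K by (simp add: a_def)
  have "a * (E / h) \<le> E * \<Delta> / sd_bound \<gamma> h"
  proof (cases "h \<le> 1")
    case True
    then show ?thesis using h K by (simp add: a_def sd_bound_def K_def mult.commute)
  next
    case False
    then have "\<Delta> / sqrt 3 * (E / h) \<le> \<Delta> / sqrt 3 * (E / 1)" using h E \<Delta>
      by (intro mult_left_mono divide_left_mono) auto
    then show ?thesis using False by (simp add: a_def sd_bound_def mult.commute)
  qed
  then have bound: "min 1 (a * (E / h)) \<le> min 1 (E * \<Delta> / sd_bound \<gamma> h)"
    by simp
  have "min 1 (min (\<Delta> / K) (\<Delta> / sqrt 3)) * min 1 (E / h) \<le> min 1 a * min 1 (E / h)"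
    using E h by (intro mult_right_mono) (auto simp: a_def)
  also have "\<dots> \<le> min 1 (a * (E / h))"
    using min_one_mult_le[OF a, of "E / h"] E h by simp
  also have "\<dots> \<le> min 1 (E * \<Delta> / sd_bound \<gamma> h)"
    by (rule bound)
  finally have "min 1 (min (\<Delta> / K) (\<Delta> / sqrt 3)) * min 1 (E / h) \<le> min 1 (E * \<Delta> / sd_bound \<gamma> h)" .
  moreover note half_min_one_le_ratio[OF sd_bound_pos[OF \<gamma> h] mult_pos_pos[OF E \<Delta>]]
  moreover have "\<And>u v w :: real. u \<le> v \<Longrightarrow> v / 2 \<le> w \<Longrightarrow> u \<le> 2 * w" by linarith
  ultimately show ?thesis by blast
qed

lemma Q_coupling_lower_bound:
  fixes \<gamma> :: real
    and P :: "'a measure" and W :: "real \<Rightarrow> 'a \<Rightarrow> real ^ 'd"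
    and Pt :: "'b measure" and Wt :: "real \<Rightarrow> 'b \<Rightarrow> real ^ 'd"
    and z zt :: "(real ^ 'd) \<times> (real ^ 'd)"
    and Z :: "real \<Rightarrow> 'a \<Rightarrow> (real ^ 'd) \<times> (real ^ 'd)"
    and Zt :: "real \<Rightarrow> 'b \<Rightarrow> (real ^ 'd) \<times> (real ^ 'd)"
  assumes \<gamma>: "\<gamma> > 0" and BM: "is_BM P W" and BMt: "is_BM Pt Wt"
    and sol: "solves_kinetic \<gamma> P W z Z" and solt: "solves_kinetic \<gamma> Pt Wt zt Zt" and "z \<noteq> zt"
  shows "\<exists>C>0. \<forall>h>0. \<forall>\<mu>. Q_coupling \<gamma> P Z Pt Zt h \<mu> \<longrightarrow>
           (\<forall>k. C * min 1 (exp (- \<gamma> * h * real k) / h) \<le> measure \<mu> {\<omega> \<in> space \<mu>. fst (\<omega> k) \<noteq> snd (\<omega> k)})"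
proof (cases "kinetic_Q \<gamma> z = kinetic_Q \<gamma> zt")
  case False
  then show ?thesis
    using Q_coupling_initial_Q_eq[OF sol solt _ _ BM BMt] by (auto intro!: exI[of _ 1])
next
  case True
  then have "snd z \<noteq> snd zt"
    using \<open>z \<noteq> zt\<close> by (auto simp: kinetic_Q_def prod_eq_iff)
  then obtain i where v: "snd z $ i \<noteq> snd zt $ i"
    by (auto simp: vec_eq_iff)
  define \<Delta> where "\<Delta> = \<bar>snd z $ i - snd zt $ i\<bar>"
  define C where "C = (5/162) * min 1 (min (\<Delta> / sqrt (2 * \<gamma>^2 * (1 + 2 * \<gamma>) + 1)) (\<Delta> / sqrt 3))"
  have \<Delta>: "\<Delta> > 0" using v by (simp add: \<Delta>_def)
  have "C * min 1 (exp (- \<gamma> * h * real k) / h) \<le> measure \<mu> {\<omega> \<in> space \<mu>. fst (\<omega> k) \<noteq> snd (\<omega> k)}"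
    if h: "h > 0" and coupling: "Q_coupling \<gamma> P Z Pt Zt h \<mu>" for h \<mu> k
  proof -
    define E where "E = exp (-\<gamma> * (real k * h))"
    have "C * min 1 (E / h) \<le> (5/162) * (2 * (E * \<Delta> / (sd_bound \<gamma> h + E * \<Delta>)))"
      using mult_left_mono[OF sd_bound_ratio_ge[OF \<gamma> h \<Delta>, of E], of "5/162"]
      unfolding C_def E_def by (simp add: mult.assoc)
    also have "\<dots> = (5/81) * (E * \<Delta> / (sd_bound \<gamma> h + E * \<Delta>))"
      by simp
    also have "\<dots> \<le> measure \<mu> {\<omega> \<in> space \<mu>. fst (\<omega> k) \<noteq> snd (\<omega> k)}"
      using Q_coupling_mismatch_ge[OF sol solt h coupling \<gamma> BM BMt v, of k] unfolding E_def \<Delta>_def .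
    finally show ?thesis by (simp add: E_def mult_ac)
  qed
  moreover have "C > 0" using \<Delta> \<gamma> by (simp add: C_def add_pos_nonneg)
  ultimately show ?thesis by blast
qed

theorem mainTheorem14:
  fixes \<gamma> :: real
    and P :: "'a measure" and W :: "real \<Rightarrow> 'a \<Rightarrow> real ^ 'd"
    and Pt :: "'b measure" and Wt :: "real \<Rightarrow> 'b \<Rightarrow> real ^ 'd"
    and z zt :: "(real ^ 'd) \<times> (real ^ 'd)"
    and Z :: "real \<Rightarrow> 'a \<Rightarrow> (real ^ 'd) \<times> (real ^ 'd)"
    and Zt :: "real \<Rightarrow> 'b \<Rightarrow> (real ^ 'd) \<times> (real ^ 'd)"
  assumes "\<gamma> > 0"
    and "is_BM P W" and "is_BM Pt Wt"
    and "solves_kinetic \<gamma> P W z Z" and "solves_kinetic \<gamma> Pt Wt zt Zt"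
    and "z \<noteq> zt"
  shows "\<exists>c>0. \<forall>h>0. \<forall>\<mu> :: (nat \<Rightarrow> ((real ^ 'd) \<times> (real ^ 'd)) \<times> ((real ^ 'd) \<times> (real ^ 'd))) measure.
           (prob_space \<mu> \<and>
            sets \<mu> = sets (Pi\<^sub>M UNIV (\<lambda>_. borel)) \<and>
            distr \<mu> (Pi\<^sub>M UNIV (\<lambda>_. borel)) (\<lambda>\<omega> k. fst (\<omega> k))
              = distr P (Pi\<^sub>M UNIV (\<lambda>_. borel)) (\<lambda>\<omega> k. Z (h * real k) \<omega>) \<and>
            distr \<mu> (Pi\<^sub>M UNIV (\<lambda>_. borel)) (\<lambda>\<omega> k. snd (\<omega> k))
              = distr Pt (Pi\<^sub>M UNIV (\<lambda>_. borel)) (\<lambda>\<omega> k. Zt (h * real k) \<omega>) \<and>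
            markov_seq \<mu> \<and>
            measure \<mu> {\<omega> \<in> space \<mu>. \<forall>k. fst (fst (\<omega> k)) + (1 / \<gamma>) *\<^sub>R snd (fst (\<omega> k))
                                       = fst (snd (\<omega> k)) + (1 / \<gamma>) *\<^sub>R snd (snd (\<omega> k))} = 1)
           \<longrightarrow> (\<forall>k::nat. measure \<mu> {\<omega> \<in> space \<mu>. fst (\<omega> k) \<noteq> snd (\<omega> k)}
                  \<ge> c * min 1 (exp (- \<gamma> * h * real k) / h))"
proof -
  obtain C where "C > 0" and bound: "\<forall>h>0. \<forall>\<mu>. Q_coupling \<gamma> P Z Pt Zt h \<mu> \<longrightarrow>
      (\<forall>k. C * min 1 (exp (- \<gamma> * h * real k) / h) \<le> measure \<mu> {\<omega> \<in> space \<mu>. fst (\<omega> k) \<noteq> snd (\<omega> k)})"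
    using Q_coupling_lower_bound[OF assms] by blast
  show ?thesis
    using \<open>C > 0\<close> bound unfolding Q_coupling_def by blast
qed

end
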